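(* For any $\alpha>0$ and any $\varepsilon\in(0,1)$ there exists $C_{\alpha,\varepsilon}>0$ such that for all $N\ge2$, $$T_{N,\alpha}(1-\varepsilon)\ge\frac{N^2}{\pi^2}\big(\log N-C_{\alpha,\varepsilon}\big).$$
   Context: $\Omega_N=\{x\in\mathbb{R}^{N-1}:0\le x_1\le\dots\le x_{N-1}\le N\}$ with $x_0=0,x_N=N$; $\rho_\alpha(u)=\frac{\Gamma(2\alpha)}{\Gamma(\alpha)^2}[u(1-u)]^{\alpha-1}$; $\pi_{N,\alpha}$ is the probability on $\Omega_N$ with density proportional to $\prod_{i=1}^N(x_i-x_{i-1})^{\alpha-1}$. The Markov chain has generator $(\mathcal{L}_{N,\alpha}f)(x)=\sum_{i=1}^{N-1}\int_0^1(f(x^{(i,u)})-f(x))\rho_\alpha(u)du$, $x^{(i,u)}_j=x_j$ ($j\ne i$), $x^{(i,u)}_i=ux_{i-1}+(1-u)x_{i+1}$; $P^x_t$ is its law at time $t$ from $x$; $T_{N,\alpha}(\varepsilon)=\inf\{t\ge0:\sup_{x\in\Omega_N}\|P^x_t-\pi_{N,\alpha}\|_{TV}<\varepsilon\}$. *)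

theory Defs
  imports "HOL-Probability.Probability"
begin

text \<open>State space: configurations are functions on the index set {1..<N}
  (extensional, as elements of the product measurable space), i.e. points of R^(N-1).\<close>

definition state_space :: "nat \<Rightarrow> (nat \<Rightarrow> real) measure" where
  "state_space N = (\<Pi>\<^sub>M i\<in>{1..<N}. lborel)"

definition xb :: "nat \<Rightarrow> (nat \<Rightarrow> real) \<Rightarrow> nat \<Rightarrow> real" where
  "xb N x i = (if i = 0 then 0 else if i = N then real N else x i)"

definition Omega :: "nat \<Rightarrow> (nat \<Rightarrow> real) set" where
  "Omega N = {x \<in> space (state_space N). \<forall>i\<in>{1..N}. xb N x (i - 1) \<le> xb N x i}"

definition rho :: "real \<Rightarrow> real \<Rightarrow> real" where
  "rho \<alpha> u = Gamma (2 * \<alpha>) / (Gamma \<alpha>)\<^sup>2 * (u * (1 - u)) powr (\<alpha> - 1)"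

definition beta_measure :: "real \<Rightarrow> real measure" where
  "beta_measure \<alpha> = density lborel (\<lambda>u. ennreal (indicator {0<..<1} u * rho \<alpha> u))"

definition pi_weight :: "nat \<Rightarrow> real \<Rightarrow> (nat \<Rightarrow> real) \<Rightarrow> ennreal" where
  "pi_weight N \<alpha> x = ennreal (indicator (Omega N) x *
      (\<Prod>i\<in>{1..N}. (xb N x i - xb N x (i - 1)) powr (\<alpha> - 1)))"

definition pi_measure :: "nat \<Rightarrow> real \<Rightarrow> (nat \<Rightarrow> real) measure" where
  "pi_measure N \<alpha> = density (state_space N)
      (\<lambda>x. pi_weight N \<alpha> x / (\<integral>\<^sup>+ y. pi_weight N \<alpha> y \<partial>state_space N))"

definition resample :: "nat \<Rightarrow> (nat \<Rightarrow> real) \<Rightarrow> nat \<Rightarrow> real \<Rightarrow> nat \<Rightarrow> real" where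
  "resample N x i u = x(i := u * xb N x (i - 1) + (1 - u) * xb N x (i + 1))"

text \<open>Jump kernel of the chain: the generator is L = (N-1)(K - I) with K below
  (choose i uniformly in {1..N-1}, then u ~ rho_alpha).\<close>
definition jump_kernel :: "nat \<Rightarrow> real \<Rightarrow> (nat \<Rightarrow> real) \<Rightarrow> (nat \<Rightarrow> real) measure" where
  "jump_kernel N \<alpha> x = uniform_count_measure {1..<N} \<bind>
      (\<lambda>i. distr (beta_measure \<alpha>) (state_space N) (\<lambda>u. resample N x i u))"

fun kernel_pow :: "nat \<Rightarrow> real \<Rightarrow> nat \<Rightarrow> (nat \<Rightarrow> real) \<Rightarrow> (nat \<Rightarrow> real) measure" where
  "kernel_pow N \<alpha> 0 x = return (state_space N) x"
| "kernel_pow N \<alpha> (Suc k) x = kernel_pow N \<alpha> k x \<bind> jump_kernel N \<alpha>"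

text \<open>Law at time t started from x: P_t = exp(tL) = sum_k e^{-(N-1)t} ((N-1)t)^k/k! K^k.\<close>
definition law_at :: "nat \<Rightarrow> real \<Rightarrow> real \<Rightarrow> (nat \<Rightarrow> real) \<Rightarrow> (nat \<Rightarrow> real) measure" where
  "law_at N \<alpha> t x = density (count_space UNIV)
      (\<lambda>k::nat. ennreal (exp (- (real (N - 1) * t)) * (real (N - 1) * t) ^ k / fact k))
      \<bind> (\<lambda>k. kernel_pow N \<alpha> k x)"

definition tv_dist :: "'a measure \<Rightarrow> 'a measure \<Rightarrow> real" where
  "tv_dist M M' = (SUP A\<in>sets M. \<bar>measure M A - measure M' A\<bar>)"

text \<open>Mixing time (as an extended real; +infinity if the set is empty).\<close>
definition mixing_time :: "nat \<Rightarrow> real \<Rightarrow> real \<Rightarrow> ereal" where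
  "mixing_time N \<alpha> \<epsilon> = Inf (ereal ` {t. t \<ge> 0 \<and>
      (SUP x\<in>Omega N. tv_dist (law_at N \<alpha> t x) (pi_measure N \<alpha>)) < \<epsilon>})"

end

theory Submission
  imports Defs
begin

(*
  Wilson's method. The observable Phi(x) = (SUM i. sin (pi i / N) * (x_i - i)) is an eigenfunction
  of the jump kernel with eigenvalue 1 - gamma / (N - 1), where gamma = 1 - cos (pi / N) ~ pi^2 / (2 N^2);
  hence in continuous time E_x Phi(X_t) = exp (- gamma t) * Phi(x). Its variance stays of order N / gamma,
  because the second moments of the gaps x_j - x_(j-1) remain bounded along the chain. The starting
  configurations i + theta (N / pi) sin (pi i / N), theta = j / m, have Phi = theta N^2 / (2 pi), so by
  Chebyshev's inequality, up to time (log N / 2 - C) / gamma the m laws of Phi(X_t) are concentrated on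
  m disjoint windows. The stationary measure gives one of these windows mass at most 1 / m, which
  keeps the total variation distance from the corresponding start above 1 - eps.
*)

section \<open>The symmetric Beta distribution\<close>

definition beta_sq_moment :: "real \<Rightarrow> real" where
  "beta_sq_moment a = (a + 1) / (2 * (2 * a + 1))"

lemma beta_sq_moment_bounds: "0 < a \<Longrightarrow> 0 \<le> beta_sq_moment a \<and> beta_sq_moment a \<le> 1 / 2"
  unfolding beta_sq_moment_def by (auto simp: field_simps)

lemma rho_nonneg: "0 < a \<Longrightarrow> 0 \<le> rho a u"
  unfolding rho_def by (intro mult_nonneg_nonneg divide_nonneg_nonneg) (auto intro: less_imp_le Gamma_real_pos)

lemma rho_measurable [measurable]: "rho a \<in> borel_measurable borel"
  unfolding rho_def by measurable

lemma nn_integral_beta_density_power: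
  assumes a: "0 < a"
  shows "(\<integral>\<^sup>+u. ennreal (indicator {0<..<1} u * rho a u * u ^ n) \<partial>lborel)
        = ennreal (Gamma (2 * a) / (Gamma a)\<^sup>2 * Beta (a + real n) a)"
proof -
  define c where "c = Gamma (2 * a) / (Gamma a)\<^sup>2"
  have "((\<lambda>t. t powr (a + real n - 1) * (1 - t) powr (a - 1)) has_integral Beta (a + real n) a) {0<..<1}"
    using has_integral_Beta_real[of "a + real n" a] a by (simp add: has_integral_Icc_iff_Ioo)
  then have "((\<lambda>t. c * (t powr (a + real n - 1) * (1 - t) powr (a - 1))) has_integral c * Beta (a + real n) a) {0<..<1}"
    by (rule has_integral_mult_right)
  moreover have "c * (t powr (a + real n - 1) * (1 - t) powr (a - 1)) = rho a t * t ^ n" if "t \<in> {0<..<1}" for t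
  proof -
    from that have t: "0 < t" "t < 1" by auto
    have "t powr (a + real n - 1) = t powr (a - 1) * t ^ n"
      using t by (simp add: powr_add[symmetric] powr_realpow[symmetric] algebra_simps)
    then show ?thesis
      using t unfolding rho_def c_def powr_mult by (simp add: algebra_simps)
  qed
  ultimately have "((\<lambda>t. rho a t * t ^ n) has_integral c * Beta (a + real n) a) {0<..<1}"
    by (rule has_integral_eq[rotated]) simp
  then have "(\<integral>\<^sup>+ x. ennreal (indicator {0<..<1} x * (rho a x * x ^ n)) \<partial>lborel) = ennreal (c * Beta (a + real n) a)"
    by (intro nn_integral_has_integral_lebesgue) (auto intro!: mult_nonneg_nonneg rho_nonneg a)
  then show ?thesis by (simp add: c_def mult.assoc)
qed

lemma Beta_symmetric_values:
  fixes a :: real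
  assumes a: "0 < a"
  shows "Gamma (2 * a) / (Gamma a)\<^sup>2 * Beta a a = 1"
    and "Gamma (2 * a) / (Gamma a)\<^sup>2 * Beta (a + 1) a = 1 / 2"
    and "Gamma (2 * a) / (Gamma a)\<^sup>2 * Beta (a + 2) a = beta_sq_moment a"
proof -
  have g: "Gamma a > 0" "Gamma (2 * a) > 0" using a by (auto intro: Gamma_real_pos)
  then have g': "Gamma a \<noteq> 0" "Gamma (a * 2) \<noteq> 0" by (auto simp: mult.commute)
  have np: "x \<notin> \<int>\<^sub>\<le>\<^sub>0" if "x > 0" for x :: real using that by (auto elim!: nonpos_Ints_cases)
  have G1: "Gamma (a + 1) = a * Gamma a" using Gamma_plus1[OF np[OF a]] .
  have G2: "Gamma (a + 2) = (a + 1) * a * Gamma a"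
    using Gamma_plus1[OF np[of "a + 1"]] a G1 by (simp add: add.assoc)
  have H1: "Gamma (2 * a + 1) = 2 * a * Gamma (2 * a)" using Gamma_plus1[OF np[of "2 * a"]] a by simp
  have H2: "Gamma (2 * a + 2) = (2 * a + 1) * (2 * a) * Gamma (2 * a)"
    using Gamma_plus1[OF np[of "2 * a + 1"]] a H1 by (simp add: add.assoc)
  have B1: "Beta (a + 1) a = Gamma (a + 1) * Gamma a / Gamma (2 * a + 1)"
    and B2: "Beta (a + 2) a = Gamma (a + 2) * Gamma a / Gamma (2 * a + 2)"
    unfolding Beta_def by (simp_all add: algebra_simps mult_2)
  show "Gamma (2 * a) / (Gamma a)\<^sup>2 * Beta a a = 1"
    using g g' unfolding Beta_def by (simp add: power2_eq_square field_simps mult_2)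
  show "Gamma (2 * a) / (Gamma a)\<^sup>2 * Beta (a + 1) a = 1 / 2"
    unfolding B1 G1 H1 using g g' a by (simp add: power2_eq_square field_simps)
  show "Gamma (2 * a) / (Gamma a)\<^sup>2 * Beta (a + 2) a = beta_sq_moment a"
    unfolding B2 G2 H2 beta_sq_moment_def using g g' a
    by (simp add: power2_eq_square divide_simps) (simp add: algebra_simps)
qed

lemma prob_space_beta_measure: "0 < a \<Longrightarrow> prob_space (beta_measure a)"
proof
  assume a: "0 < a"
  have "emeasure (beta_measure a) (space (beta_measure a))
      = (\<integral>\<^sup>+u. ennreal (indicator {0<..<1} u * rho a u * u ^ 0) \<partial>lborel)"
    unfolding beta_measure_def by (simp add: emeasure_density)
  also have "\<dots> = 1"
    using nn_integral_beta_density_power[OF a, of 0] Beta_symmetric_values(1)[OF a]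
    by (simp only: of_nat_0 add_0_right ennreal_1)
  finally show "emeasure (beta_measure a) (space (beta_measure a)) = 1" .
qed

lemma sets_beta_measure [measurable_cong, simp]: "sets (beta_measure a) = sets borel"
  by (simp add: beta_measure_def)

lemma AE_beta_measure_in_unit_interval: "AE u in beta_measure a. 0 < u \<and> u < 1"
  unfolding beta_measure_def by (subst AE_density) (auto split: split_indicator)

lemma integrable_beta_measure_power:
  assumes a: "0 < a"
  shows "integrable (beta_measure a) (\<lambda>u. u ^ n)"
proof -
  interpret prob_space "beta_measure a" by (rule prob_space_beta_measure[OF a])
  show ?thesis
  proof (rule integrable_const_bound[where B=1])
    show "AE u in beta_measure a. norm (u ^ n) \<le> 1"
      using AE_beta_measure_in_unit_interval by eventually_elim (auto simp: power_abs intro: power_le_one)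
  qed simp
qed

lemma integral_beta_measure_power:
  assumes a: "0 < a"
  shows "(\<integral>u. u ^ n \<partial>beta_measure a) = Gamma (2 * a) / (Gamma a)\<^sup>2 * Beta (a + real n) a"
proof -
  have "(\<integral>u. u ^ n \<partial>beta_measure a) = (\<integral>u. (indicator {0<..<1} u * rho a u) * u ^ n \<partial>lborel)"
    unfolding beta_measure_def
    by (subst integral_density) (auto intro!: mult_nonneg_nonneg rho_nonneg a)
  also have "\<dots> = enn2real (\<integral>\<^sup>+u. ennreal (indicator {0<..<1} u * rho a u * u ^ n) \<partial>lborel)"
    by (rule integral_eq_nn_integral)
       (auto intro!: AE_I2 mult_nonneg_nonneg rho_nonneg a split: split_indicator)
  also have "\<dots> = Gamma (2 * a) / (Gamma a)\<^sup>2 * Beta (a + real n) a"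
    unfolding nn_integral_beta_density_power[OF a] using a
    by (intro enn2real_ennreal)
       (auto intro!: mult_nonneg_nonneg divide_nonneg_nonneg less_imp_le[OF Gamma_real_pos] simp: Beta_def)
  finally show ?thesis .
qed

lemma integral_beta_measure_quadratic:
  assumes a: "0 < a"
  shows "(\<integral>u. c0 + c1 * u + c2 * u\<^sup>2 \<partial>beta_measure a) = c0 + c1 / 2 + c2 * beta_sq_moment a"
proof -
  interpret prob_space "beta_measure a" by (rule prob_space_beta_measure[OF a])
  have "(\<integral>u. u \<partial>beta_measure a) = 1 / 2"
    using integral_beta_measure_power[OF a, of 1] Beta_symmetric_values(2)[OF a]
    by (simp only: of_nat_1 power_one_right)
  moreover have "(\<integral>u. u\<^sup>2 \<partial>beta_measure a) = beta_sq_moment a"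
    using integral_beta_measure_power[OF a, of 2] Beta_symmetric_values(3)[OF a]
    by (simp only: of_nat_numeral)
  moreover have "integrable (beta_measure a) (\<lambda>u. u)" "integrable (beta_measure a) (\<lambda>u. u\<^sup>2)"
    using integrable_beta_measure_power[OF a, of 1] integrable_beta_measure_power[OF a, of 2] by simp_all
  ultimately show ?thesis by (simp add: prob_space[simplified])
qed

section \<open>Configurations and the resampling move\<close>

lemma space_state_space: "space (state_space N) = (\<Pi>\<^sub>E i\<in>{1..<N}. UNIV)"
  by (simp add: state_space_def space_PiM)

lemma xb_0 [simp]: "xb N x 0 = 0" and xb_N [simp]: "xb N x N = real N"
  by (auto simp: xb_def)

lemma xb_measurable [measurable]: "(\<lambda>x. xb N x m) \<in> borel_measurable (state_space N)"
proof (cases "m \<in> {1..<N}")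
  case True
  then have "(\<lambda>x. x m) \<in> borel_measurable (state_space N)"
    unfolding state_space_def by measurable
  then show ?thesis using True by (simp add: xb_def)
next
  case False
  then have "xb N x m = (if m = 0 then 0 else if m = N then real N else undefined)"
    if "x \<in> space (state_space N)" for x
    using that by (auto simp: xb_def space_state_space PiE_def extensional_def)
  then show ?thesis by (subst measurable_cong) auto
qed

lemma Omega_sets [measurable]: "Omega N \<in> sets (state_space N)"
  unfolding Omega_def by (rule sets.sets_Collect_finite_All) (auto intro: borel_measurable_le)

lemma Omega_in_space: "x \<in> Omega N \<Longrightarrow> x \<in> space (state_space N)"
  by (simp add: Omega_def)

lemma xb_mono_Omega:
  assumes "x \<in> Omega N" "j \<le> k" "k \<le> N"
  shows "xb N x j \<le> xb N x k"
  using assms(2,3)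
proof (induction k)
  case (Suc k)
  show ?case
  proof (cases "j = Suc k")
    case False
    then have "xb N x j \<le> xb N x k" using Suc by auto
    also have "xb N x k \<le> xb N x (Suc k)" using assms(1) Suc.prems unfolding Omega_def by force
    finally show ?thesis .
  qed simp
qed simp

lemma xb_bounds_Omega:
  assumes "x \<in> Omega N" "j \<le> N"
  shows "0 \<le> xb N x j" "xb N x j \<le> real N"
  using xb_mono_Omega[OF assms(1), of 0 j] xb_mono_Omega[OF assms(1), of j N] assms by auto

lemma xb_resample:
  assumes "i \<in> {1..<N}"
  shows "xb N (resample N x i u) m =
    (if m = i then u * xb N x (i - 1) + (1 - u) * xb N x (i + 1) else xb N x m)"
  using assms by (auto simp: xb_def resample_def)

lemma resample_in_space:
  assumes "x \<in> space (state_space N)" "i \<in> {1..<N}"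
  shows "resample N x i u \<in> space (state_space N)"
  using assms by (auto simp: space_state_space resample_def PiE_def extensional_def)

lemma resample_in_Omega:
  assumes x: "x \<in> Omega N" and i: "i \<in> {1..<N}" and u: "0 \<le> u" "u \<le> 1"
  shows "resample N x i u \<in> Omega N"
proof -
  have mono: "xb N x (i - 1) \<le> xb N x (i + 1)" using xb_mono_Omega[OF x] i by auto
  have "xb N x (i - 1) \<le> u * xb N x (i - 1) + (1 - u) * xb N x (i + 1)"
       "u * xb N x (i - 1) + (1 - u) * xb N x (i + 1) \<le> xb N x (i + 1)"
    using mult_left_mono[OF mono, of "1 - u"] mult_left_mono[OF mono, of u] u
    by (simp_all add: algebra_simps)
  then show ?thesis
    using x i resample_in_space[OF Omega_in_space[OF x] i]
    unfolding Omega_def by (auto simp: xb_resample[OF i])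
qed

lemma measurable_resample:
  assumes i: "i \<in> {1..<N}"
  shows "(\<lambda>(x, u). resample N x i u) \<in> state_space N \<Otimes>\<^sub>M borel \<rightarrow>\<^sub>M state_space N"
proof -
  have "(\<lambda>p. \<lambda>j\<in>{1..<N}. resample N (fst p) i (snd p) j)
      \<in> state_space N \<Otimes>\<^sub>M borel \<rightarrow>\<^sub>M (\<Pi>\<^sub>M j\<in>{1..<N}. lborel)"
  proof (rule measurable_restrict)
    fix j assume j: "j \<in> {1..<N}"
    have "(\<lambda>p. fst p j) \<in> borel_measurable (state_space N \<Otimes>\<^sub>M borel)"
      using j unfolding state_space_def by measurable
    then show "(\<lambda>p. resample N (fst p) i (snd p) j) \<in> (state_space N \<Otimes>\<^sub>M borel) \<rightarrow>\<^sub>M lborel"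
      unfolding measurable_lborel2 resample_def fun_upd_apply by (cases "j = i") simp_all
  qed
  moreover have "(\<lambda>j\<in>{1..<N}. resample N (fst p) i (snd p) j) = resample N (fst p) i (snd p)"
    if "p \<in> space (state_space N \<Otimes>\<^sub>M borel)" for p
    using resample_in_space[of "fst p" N i "snd p"] that i
    by (auto simp: space_pair_measure space_state_space PiE_def extensional_def)
  ultimately show ?thesis
    by (subst measurable_cong[where g="\<lambda>p. \<lambda>j\<in>{1..<N}. resample N (fst p) i (snd p) j"])
       (auto simp: case_prod_beta state_space_def)
qed

lemma measurable_resample_at:
  assumes x: "x \<in> space (state_space N)" and i: "i \<in> {1..<N}"
  shows "resample N x i \<in> beta_measure a \<rightarrow>\<^sub>M state_space N"
proof -
  have "(\<lambda>u. (x, u)) \<in> beta_measure a \<rightarrow>\<^sub>M state_space N \<Otimes>\<^sub>M borel"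
    by (rule measurable_Pair[OF measurable_const[OF x] measurable_ident_sets[OF sets_beta_measure]])
  from measurable_compose[OF this measurable_resample[OF i]] show ?thesis by simp
qed

lemma measurable_resample_random_site:
  "(\<lambda>(p, u). resample N (fst p) (snd p) u)
     \<in> (state_space N \<Otimes>\<^sub>M count_space {1..<N}) \<Otimes>\<^sub>M beta_measure a \<rightarrow>\<^sub>M state_space N"
proof -
  have "(\<lambda>q. resample N (fst (fst q)) (snd (fst q)) (snd q))
      \<in> (state_space N \<Otimes>\<^sub>M count_space {1..<N}) \<Otimes>\<^sub>M beta_measure a \<rightarrow>\<^sub>M state_space N"
  proof (rule measurable_compose_countable'[where I="{1..<N}"])
    fix i assume i: "i \<in> {1..<N}"
    have "(\<lambda>q. (fst (fst q), snd q))
        \<in> (state_space N \<Otimes>\<^sub>M count_space {1..<N}) \<Otimes>\<^sub>M beta_measure a \<rightarrow>\<^sub>M state_space N \<Otimes>\<^sub>M borel"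
      by (rule measurable_Pair)
         (simp_all add: measurable_cong_sets[OF refl sets_beta_measure, symmetric])
    from measurable_compose[OF this measurable_resample[OF i]]
    show "(\<lambda>q. resample N (fst (fst q)) i (snd q))
        \<in> (state_space N \<Otimes>\<^sub>M count_space {1..<N}) \<Otimes>\<^sub>M beta_measure a \<rightarrow>\<^sub>M state_space N"
      by simp
  qed simp_all
  then show ?thesis by (simp add: case_prod_beta)
qed

section \<open>The jump kernel and its iterates\<close>

lemma in_space_prob_algebraI: "prob_space M \<Longrightarrow> sets M = sets N \<Longrightarrow> M \<in> space (prob_algebra N)"
  by (simp add: space_prob_algebra)

lemma bind_in_space_prob_algebra:
  assumes "A \<in> space (prob_algebra M)" "B \<in> M \<rightarrow>\<^sub>M prob_algebra L"
  shows "A \<bind> B \<in> space (prob_algebra L)"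
  using measurable_bind_prob_space[OF measurable_const[OF assms(1), of "count_space UNIV"] assms(2),
      THEN measurable_space, of undefined]
  by simp

lemma measurable_distr_resample:
  assumes a: "0 < a" and x: "x \<in> space (state_space N)"
  shows "(\<lambda>i. distr (beta_measure a) (state_space N) (resample N x i))
    \<in> uniform_count_measure {1..<N} \<rightarrow>\<^sub>M subprob_algebra (state_space N)"
  unfolding measurable_cong_sets[OF sets_uniform_count_measure_count_space refl] measurable_count_space_eq1
  using measurable_resample_at[OF x]
  by (auto simp: space_subprob_algebra
      intro!: prob_space_imp_subprob_space prob_space.prob_space_distr[OF prob_space_beta_measure[OF a]])

lemma jump_kernel_measurable:
  assumes a: "0 < a" and N: "2 \<le> N"
  shows "jump_kernel N a \<in> state_space N \<rightarrow>\<^sub>M prob_algebra (state_space N)"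
proof -
  have "(\<lambda>p. distr (beta_measure a) (state_space N) (resample N (fst p) (snd p)))
      \<in> state_space N \<Otimes>\<^sub>M count_space {1..<N} \<rightarrow>\<^sub>M prob_algebra (state_space N)"
  proof (rule measurable_distr_prob_space2[where M="beta_measure a"])
    show "(\<lambda>x. beta_measure a) \<in> state_space N \<Otimes>\<^sub>M count_space {1..<N} \<rightarrow>\<^sub>M prob_algebra (beta_measure a)"
      by (intro measurable_const in_space_prob_algebraI prob_space_beta_measure a) simp
  qed (rule measurable_resample_random_site)
  moreover have "(\<lambda>x. uniform_count_measure {1..<N}) \<in> state_space N \<rightarrow>\<^sub>M prob_algebra (count_space {1..<N})"
    using N by (intro measurable_const in_space_prob_algebraI prob_space_uniform_count_measure)
       (auto simp: sets_uniform_count_measure)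
  ultimately show ?thesis
    unfolding jump_kernel_def[abs_def]
    by (intro measurable_bind_prob_space2) (auto simp: case_prod_beta)
qed

lemma jump_kernel_measurable_subprob:
  assumes a: "0 < a" and N: "2 \<le> N" and "sets M = sets (state_space N)"
  shows "jump_kernel N a \<in> M \<rightarrow>\<^sub>M subprob_algebra (state_space N)"
  unfolding measurable_cong_sets[OF assms(3) refl]
  by (rule measurable_prob_algebraD[OF jump_kernel_measurable[OF a N]])

lemma prob_space_jump_kernel:
  assumes a: "0 < a" and N: "2 \<le> N" and x: "x \<in> space (state_space N)"
  shows "prob_space (jump_kernel N a x)"
  using measurable_space[OF jump_kernel_measurable[OF a N] x] by (auto simp: space_prob_algebra)

lemma kernel_pow_in_prob_algebra:
  assumes a: "0 < a" and N: "2 \<le> N" and x: "x \<in> space (state_space N)"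
  shows "kernel_pow N a k x \<in> space (prob_algebra (state_space N))"
proof (induction k)
  case 0
  show ?case using measurable_space[OF measurable_return_prob_space x] by simp
next
  case (Suc k)
  show ?case using bind_in_space_prob_algebra[OF Suc jump_kernel_measurable[OF a N]] by simp
qed

lemma
  assumes a: "0 < a" and N: "2 \<le> N" and x: "x \<in> space (state_space N)"
  shows prob_space_kernel_pow: "prob_space (kernel_pow N a k x)"
    and sets_kernel_pow: "sets (kernel_pow N a k x) = sets (state_space N)"
    and space_kernel_pow: "space (kernel_pow N a k x) = space (state_space N)"
proof -
  show "prob_space (kernel_pow N a k x)" and sets: "sets (kernel_pow N a k x) = sets (state_space N)"
    using kernel_pow_in_prob_algebra[OF a N x, of k] by (auto simp: space_prob_algebra)
  show "space (kernel_pow N a k x) = space (state_space N)"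
    using sets_eq_imp_space_eq[OF sets] .
qed

lemma AE_jump_kernel_Omega:
  assumes a: "0 < a" and N: "2 \<le> N" and x: "x \<in> Omega N"
  shows "AE y in jump_kernel N a x. y \<in> Omega N"
proof -
  have xs: "x \<in> space (state_space N)" using Omega_in_space[OF x] .
  have "AE i in uniform_count_measure {1..<N}.
      AE y in distr (beta_measure a) (state_space N) (resample N x i). y \<in> Omega N"
  proof (rule AE_I2)
    fix i assume "i \<in> space (uniform_count_measure {1..<N})"
    then have i: "i \<in> {1..<N}" by (simp add: space_uniform_count_measure)
    have "AE u in beta_measure a. resample N x i u \<in> Omega N"
      using AE_beta_measure_in_unit_interval[of a]
      by eventually_elim (auto intro!: resample_in_Omega[OF x i])
    then show "AE y in distr (beta_measure a) (state_space N) (resample N x i). y \<in> Omega N"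
      by (subst AE_distr_iff[OF measurable_resample_at[OF xs i]]) auto
  qed
  then show ?thesis
    unfolding jump_kernel_def by (subst AE_bind[OF measurable_distr_resample[OF a xs]]) auto
qed

lemma AE_kernel_pow_Omega:
  assumes a: "0 < a" and N: "2 \<le> N" and x: "x \<in> Omega N"
  shows "AE y in kernel_pow N a k x. y \<in> Omega N"
proof (induction k)
  case 0
  show ?case using x Omega_in_space[OF x] by (subst kernel_pow.simps, subst AE_return) auto
next
  case (Suc k)
  have J: "jump_kernel N a \<in> kernel_pow N a k x \<rightarrow>\<^sub>M subprob_algebra (state_space N)"
    by (rule jump_kernel_measurable_subprob[OF a N sets_kernel_pow[OF a N Omega_in_space[OF x]]])
  show ?case
    unfolding kernel_pow.simps
    by (subst AE_bind[OF J]) (use Suc AE_jump_kernel_Omega[OF a N] in \<open>auto elim!: eventually_mono\<close>)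
qed

section \<open>Expectations along the chain\<close>

definition bounded_observable :: "nat \<Rightarrow> ((nat \<Rightarrow> real) \<Rightarrow> real) \<Rightarrow> bool" where
  "bounded_observable N f \<longleftrightarrow> f \<in> borel_measurable (state_space N) \<and> (\<exists>B. \<forall>y\<in>Omega N. \<bar>f y\<bar> \<le> B)"

lemma bounded_observable_measurable: "bounded_observable N f \<Longrightarrow> f \<in> borel_measurable (state_space N)"
  by (simp add: bounded_observable_def)

lemma bounded_observable_const: "bounded_observable N (\<lambda>y. c)"
  unfolding bounded_observable_def by auto

lemma bounded_observable_add:
  "bounded_observable N f \<Longrightarrow> bounded_observable N g \<Longrightarrow> bounded_observable N (\<lambda>y. f y + g y)"
  unfolding bounded_observable_def
proof (elim conjE exE, intro conjI exI ballI)
  fix B1 B2 y assume "\<forall>y\<in>Omega N. \<bar>f y\<bar> \<le> B1" "\<forall>y\<in>Omega N. \<bar>g y\<bar> \<le> B2" "y \<in> Omega N"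
  then show "\<bar>f y + g y\<bar> \<le> B1 + B2" by (smt (verit))
qed auto

lemma bounded_observable_mult:
  "bounded_observable N f \<Longrightarrow> bounded_observable N g \<Longrightarrow> bounded_observable N (\<lambda>y. f y * g y)"
  unfolding bounded_observable_def
proof (elim conjE exE, intro conjI exI ballI)
  fix B1 B2 y assume "\<forall>y\<in>Omega N. \<bar>f y\<bar> \<le> B1" "\<forall>y\<in>Omega N. \<bar>g y\<bar> \<le> B2" "y \<in> Omega N"
  then show "\<bar>f y * g y\<bar> \<le> B1 * B2" unfolding abs_mult by (intro mult_mono) auto
qed auto

lemma bounded_observable_diff:
  "bounded_observable N f \<Longrightarrow> bounded_observable N g \<Longrightarrow> bounded_observable N (\<lambda>y. f y - g y)"
  using bounded_observable_add[OF _ bounded_observable_mult[OF bounded_observable_const[of N "- 1"]], of f g]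
  by simp

lemma bounded_observable_power2: "bounded_observable N f \<Longrightarrow> bounded_observable N (\<lambda>y. (f y)\<^sup>2)"
  using bounded_observable_mult[of N f f] by (simp add: power2_eq_square)

lemma bounded_observable_divide: "bounded_observable N f \<Longrightarrow> bounded_observable N (\<lambda>y. f y / c)"
  using bounded_observable_mult[OF _ bounded_observable_const[of N "1 / c"], of f] by simp

lemma bounded_observable_sum:
  "(\<And>i. i \<in> I \<Longrightarrow> bounded_observable N (f i)) \<Longrightarrow> bounded_observable N (\<lambda>y. \<Sum>i\<in>I. f i y)"
proof (induction I rule: infinite_finite_induct)
  case (insert i I)
  then show ?case using bounded_observable_add[of N "f i" "\<lambda>y. \<Sum>i\<in>I. f i y"] by simp
qed (simp_all add: bounded_observable_const)

text \<open>Outside \<open>{0..N}\<close> the value \<^term>\<open>xb N y j\<close> is the junk value \<^term>\<open>undefined\<close>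
  of the extensional configuration, which is still a constant on \<^term>\<open>Omega N\<close>.\<close>

lemma bounded_observable_xb: "bounded_observable N (\<lambda>y. xb N y j)"
proof (cases "j \<le> N")
  case True
  then show ?thesis
    unfolding bounded_observable_def using xb_bounds_Omega[of _ N j]
    by (intro conjI exI[of _ "real N"]) auto
next
  case False
  then have "xb N y j = undefined" if "y \<in> Omega N" for y
    using Omega_in_space[OF that] by (auto simp: xb_def space_state_space PiE_def extensional_def)
  then show ?thesis
    unfolding bounded_observable_def by (intro conjI xb_measurable exI[of _ "\<bar>undefined::real\<bar>"]) auto
qed

definition resample_mean :: "nat \<Rightarrow> real \<Rightarrow> ((nat \<Rightarrow> real) \<Rightarrow> real) \<Rightarrow> (nat \<Rightarrow> real) \<Rightarrow> nat \<Rightarrow> real" where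
  "resample_mean N a f y i = (\<integral>u. f (resample N y i u) \<partial>beta_measure a)"

definition jump_mean :: "nat \<Rightarrow> real \<Rightarrow> ((nat \<Rightarrow> real) \<Rightarrow> real) \<Rightarrow> (nat \<Rightarrow> real) \<Rightarrow> real" where
  "jump_mean N a f y = (\<Sum>i\<in>{1..<N}. resample_mean N a f y i) / real (N - 1)"

lemma resample_mean_quadratic:
  assumes a: "0 < a" and "\<And>u. f (resample N y i u) = c0 + c1 * u + c2 * u\<^sup>2"
  shows "resample_mean N a f y i = c0 + c1 / 2 + c2 * beta_sq_moment a"
  unfolding resample_mean_def assms(2) by (rule integral_beta_measure_quadratic[OF a])

lemma resample_mean_cong_Omega:
  assumes a: "0 < a" and y: "y \<in> Omega N" and i: "i \<in> {1..<N}"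
    and f: "f \<in> borel_measurable (state_space N)" and g: "g \<in> borel_measurable (state_space N)"
    and eq: "\<And>z. z \<in> Omega N \<Longrightarrow> f z = g z"
  shows "resample_mean N a f y i = resample_mean N a g y i"
  unfolding resample_mean_def
proof (rule integral_cong_AE)
  show "(\<lambda>u. f (resample N y i u)) \<in> borel_measurable (beta_measure a)"
       "(\<lambda>u. g (resample N y i u)) \<in> borel_measurable (beta_measure a)"
    using measurable_compose[OF measurable_resample_at[OF Omega_in_space[OF y] i] f]
      measurable_compose[OF measurable_resample_at[OF Omega_in_space[OF y] i] g]
    by (simp_all add: comp_def)
  show "AE u in beta_measure a. f (resample N y i u) = g (resample N y i u)"
    using AE_beta_measure_in_unit_interval[of a]
    by eventually_elim (auto intro!: eq resample_in_Omega[OF y i])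
qed

lemma bounded_observable_resample_mean:
  assumes a: "0 < a" and i: "i \<in> {1..<N}" and f: "bounded_observable N f"
  shows "bounded_observable N (\<lambda>y. resample_mean N a f y i)"
proof -
  interpret beta: prob_space "beta_measure a" by (rule prob_space_beta_measure[OF a])
  have fm: "f \<in> borel_measurable (state_space N)"
    using f by (simp add: bounded_observable_def)
  obtain B where B: "\<And>y. y \<in> Omega N \<Longrightarrow> \<bar>f y\<bar> \<le> B"
    using f by (auto simp: bounded_observable_def)
  have "f \<circ> (\<lambda>(y, u). resample N y i u) \<in> borel_measurable (state_space N \<Otimes>\<^sub>M borel)"
    by (rule measurable_comp[OF measurable_resample[OF i] fm])
  then have "case_prod (\<lambda>y u. f (resample N y i u)) \<in> borel_measurable (state_space N \<Otimes>\<^sub>M beta_measure a)"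
    unfolding measurable_cong_sets[OF sets_pair_measure_cong[OF refl sets_beta_measure] refl]
    by (simp add: comp_def case_prod_unfold)
  then have "(\<lambda>y. resample_mean N a f y i) \<in> borel_measurable (state_space N)"
    unfolding resample_mean_def by (rule beta.borel_measurable_lebesgue_integral)
  moreover have "\<bar>resample_mean N a f y i\<bar> \<le> B" if y: "y \<in> Omega N" for y
  proof -
    have AE: "AE u in beta_measure a. \<bar>f (resample N y i u)\<bar> \<le> B"
      using AE_beta_measure_in_unit_interval[of a]
      by eventually_elim (auto intro!: B resample_in_Omega[OF y i])
    have "(\<lambda>u. f (resample N y i u)) \<in> borel_measurable (beta_measure a)"
      using measurable_compose[OF measurable_resample_at[OF Omega_in_space[OF y] i] fm]
      by (simp add: comp_def)
    then have int: "integrable (beta_measure a) (\<lambda>u. f (resample N y i u))"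
      using AE by (intro beta.integrable_const_bound[where B=B]) simp_all
    have "resample_mean N a f y i \<le> B"
      unfolding resample_mean_def
      using AE by (intro beta.integral_le_const[OF int]) (auto elim!: eventually_mono)
    moreover have "- B \<le> resample_mean N a f y i"
      unfolding resample_mean_def
      using AE by (intro beta.integral_ge_const[OF int]) (auto elim!: eventually_mono)
    ultimately show ?thesis by linarith
  qed
  ultimately show ?thesis unfolding bounded_observable_def by blast
qed

lemma bounded_observable_jump_mean:
  "0 < a \<Longrightarrow> bounded_observable N f \<Longrightarrow> bounded_observable N (jump_mean N a f)"
  unfolding jump_mean_def[abs_def]
  by (rule bounded_observable_divide, rule bounded_observable_sum, rule bounded_observable_resample_mean)

lemma integral_jump_kernel:
  fixes f :: "(nat \<Rightarrow> real) \<Rightarrow> real"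
  assumes a: "0 < a" and N: "2 \<le> N" and y: "y \<in> space (state_space N)"
    and f [measurable]: "f \<in> borel_measurable (state_space N)"
    and B: "\<And>z. z \<in> space (state_space N) \<Longrightarrow> \<bar>f z\<bar> \<le> B"
  shows "(\<integral>z. f z \<partial>jump_kernel N a y) = jump_mean N a f y"
proof -
  let ?D = "\<lambda>i. distr (beta_measure a) (state_space N) (resample N y i)"
  have "(\<integral>z. f z \<partial>jump_kernel N a y) = (\<integral>i. (\<integral>z. f z \<partial>?D i) \<partial>uniform_count_measure {1..<N})"
    unfolding jump_kernel_def
  proof (rule integral_bind[where K="state_space N" and B=B and B'=1])
    show "?D \<in> uniform_count_measure {1..<N} \<rightarrow>\<^sub>M subprob_algebra (state_space N)"
      by (rule measurable_distr_resample[OF a y])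
    show "AE i in uniform_count_measure {1..<N}. emeasure (?D i) (space (?D i)) \<le> ennreal 1"
    proof (rule AE_I2)
      fix i assume "i \<in> space (uniform_count_measure {1..<N})"
      then have i: "i \<in> {1..<N}" by (simp add: space_uniform_count_measure)
      interpret prob_space "?D i"
        by (rule prob_space.prob_space_distr[OF prob_space_beta_measure[OF a] measurable_resample_at[OF y i]])
      show "emeasure (?D i) (space (?D i)) \<le> ennreal 1" using emeasure_space_1 by simp
    qed
    show "finite_measure (uniform_count_measure {1..<N})"
      using N by (intro prob_space_uniform_count_measure[THEN prob_space.axioms(1)]) auto
  qed (use B in auto)
  also have "\<dots> = (\<Sum>i\<in>{1..<N}. (\<integral>z. f z \<partial>?D i)) / card {1..<N}"
    by (rule integral_uniform_count_measure) simp
  also have "\<dots> = jump_mean N a f y"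
  proof -
    have "(\<integral>z. f z \<partial>?D i) = resample_mean N a f y i" if i: "i \<in> {1..<N}" for i
      unfolding resample_mean_def by (rule integral_distr[OF measurable_resample_at[OF y i] f])
    then show ?thesis unfolding jump_mean_def by simp
  qed
  finally show ?thesis .
qed

lemma measurable_kernel_pow:
  assumes a: "0 < a" and N: "2 \<le> N" and x: "x \<in> Omega N" and f: "f \<in> borel_measurable (state_space N)"
  shows "f \<in> borel_measurable (kernel_pow N a k x)"
  unfolding measurable_cong_sets[OF sets_kernel_pow[OF a N Omega_in_space[OF x]] refl] by (rule f)

lemma integrable_kernel_pow:
  assumes a: "0 < a" and N: "2 \<le> N" and x: "x \<in> Omega N" and f: "bounded_observable N f"
  shows "integrable (kernel_pow N a k x) f"
proof -
  interpret prob_space "kernel_pow N a k x" by (rule prob_space_kernel_pow[OF a N Omega_in_space[OF x]])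
  obtain B where B: "\<And>y. y \<in> Omega N \<Longrightarrow> \<bar>f y\<bar> \<le> B"
    using f by (auto simp: bounded_observable_def)
  show ?thesis
  proof (rule integrable_const_bound[where B=B])
    show "AE y in kernel_pow N a k x. norm (f y) \<le> B"
      using AE_kernel_pow_Omega[OF a N x, of k] by eventually_elim (auto intro: B)
  qed (rule measurable_kernel_pow[OF a N x bounded_observable_measurable[OF f]])
qed

lemma integral_kernel_pow_0:
  fixes f :: "(nat \<Rightarrow> real) \<Rightarrow> real"
  assumes x: "x \<in> space (state_space N)" and f: "f \<in> borel_measurable (state_space N)"
  shows "(\<integral>y. f y \<partial>kernel_pow N a 0 x) = f x"
  using integral_return[OF x f] by simp

lemma integral_kernel_pow_Suc_bind:
  fixes f :: "(nat \<Rightarrow> real) \<Rightarrow> real"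
  assumes a: "0 < a" and N: "2 \<le> N" and x: "x \<in> space (state_space N)"
    and f: "f \<in> borel_measurable (state_space N)" and B: "\<And>z. \<bar>f z\<bar> \<le> B"
  shows "(\<integral>y. f y \<partial>kernel_pow N a (Suc k) x) = (\<integral>y. (\<integral>z. f z \<partial>jump_kernel N a y) \<partial>kernel_pow N a k x)"
  unfolding kernel_pow.simps
proof (rule integral_bind[where K="state_space N" and B=B and B'=1])
  show "jump_kernel N a \<in> kernel_pow N a k x \<rightarrow>\<^sub>M subprob_algebra (state_space N)"
    by (rule jump_kernel_measurable_subprob[OF a N sets_kernel_pow[OF a N x]])
  show "finite_measure (kernel_pow N a k x)"
    by (rule prob_space.axioms(1)[OF prob_space_kernel_pow[OF a N x]])
  show "AE y in kernel_pow N a k x. emeasure (jump_kernel N a y) (space (jump_kernel N a y)) \<le> ennreal 1"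
  proof (rule AE_I2)
    fix y assume "y \<in> space (kernel_pow N a k x)"
    then have y: "y \<in> space (state_space N)" using space_kernel_pow[OF a N x] by simp
    interpret prob_space "jump_kernel N a y" by (rule prob_space_jump_kernel[OF a N y])
    show "emeasure (jump_kernel N a y) (space (jump_kernel N a y)) \<le> ennreal 1"
      by (simp add: emeasure_space_1)
  qed
qed (use f B in auto)

text \<open>The integrand is first cut off outside \<^term>\<open>Omega N\<close>, where observables need not be bounded.\<close>

lemma integral_kernel_pow_Suc:
  assumes a: "0 < a" and N: "2 \<le> N" and x: "x \<in> Omega N" and f: "bounded_observable N f"
  shows "(\<integral>y. f y \<partial>kernel_pow N a (Suc k) x) = (\<integral>y. jump_mean N a f y \<partial>kernel_pow N a k x)"
proof -
  have xs: "x \<in> space (state_space N)" using Omega_in_space[OF x] .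
  have fm [measurable]: "f \<in> borel_measurable (state_space N)"
    using f by (simp add: bounded_observable_def)
  obtain B where B: "\<And>y. y \<in> Omega N \<Longrightarrow> \<bar>f y\<bar> \<le> B"
    using f by (auto simp: bounded_observable_def)
  define f' where "f' y = indicator (Omega N) y * f y" for y
  have f'm [measurable]: "f' \<in> borel_measurable (state_space N)" unfolding f'_def by measurable
  have B': "\<bar>f' y\<bar> \<le> max B 0" for y using B[of y] unfolding f'_def by (auto split: split_indicator)
  have "(\<integral>y. f y \<partial>kernel_pow N a (Suc k) x) = (\<integral>y. f' y \<partial>kernel_pow N a (Suc k) x)"
    using AE_kernel_pow_Omega[OF a N x, of "Suc k"]
    by (intro integral_cong_AE measurable_kernel_pow[OF a N x]) (auto simp: f'_def elim!: eventually_mono)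
  also have "\<dots> = (\<integral>y. (\<integral>z. f' z \<partial>jump_kernel N a y) \<partial>kernel_pow N a k x)"
    by (rule integral_kernel_pow_Suc_bind[OF a N xs f'm B'])
  also have "\<dots> = (\<integral>y. jump_mean N a f y \<partial>kernel_pow N a k x)"
  proof (rule integral_cong_AE)
    show "(\<lambda>y. \<integral>z. f' z \<partial>jump_kernel N a y) \<in> borel_measurable (kernel_pow N a k x)"
      by (rule measurable_compose[OF jump_kernel_measurable_subprob[OF a N sets_kernel_pow[OF a N xs]]
            integral_measurable_subprob_algebra[OF f'm]])
    show "jump_mean N a f \<in> borel_measurable (kernel_pow N a k x)"
      using bounded_observable_jump_mean[OF a f]
      by (intro measurable_kernel_pow[OF a N x]) (simp add: bounded_observable_def)
    show "AE y in kernel_pow N a k x. (\<integral>z. f' z \<partial>jump_kernel N a y) = jump_mean N a f y"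
      using AE_kernel_pow_Omega[OF a N x, of k]
    proof eventually_elim
      case (elim y)
      have "(\<integral>z. f' z \<partial>jump_kernel N a y) = jump_mean N a f' y"
        by (rule integral_jump_kernel[OF a N Omega_in_space[OF elim] f'm B'])
      also have "\<dots> = jump_mean N a f y"
        unfolding jump_mean_def
        by (intro arg_cong2[where f="(/)"] sum.cong refl resample_mean_cong_Omega[OF a elim _ f'm fm])
           (simp_all add: f'_def)
      finally show ?case .
    qed
  qed
  finally show ?thesis .
qed

lemma integral_kernel_pow_jump_mean:
  assumes a: "0 < a" and N: "2 \<le> N" and x: "x \<in> Omega N" and f: "bounded_observable N f"
  shows "(\<integral>y. jump_mean N a f y \<partial>kernel_pow N a k x)
    = (\<Sum>i\<in>{1..<N}. \<integral>y. resample_mean N a f y i \<partial>kernel_pow N a k x) / real (N - 1)"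
  unfolding jump_mean_def
  using integrable_kernel_pow[OF a N x bounded_observable_resample_mean[OF a _ f]]
  by (simp add: integral_sum)

section \<open>Second moments of the gaps\<close>

definition gap :: "nat \<Rightarrow> (nat \<Rightarrow> real) \<Rightarrow> nat \<Rightarrow> real" where
  "gap N x j = xb N x j - xb N x (j - 1)"

lemma gap_measurable [measurable]: "(\<lambda>x. gap N x j) \<in> borel_measurable (state_space N)"
  unfolding gap_def by measurable

lemma bounded_observable_gap: "bounded_observable N (\<lambda>y. gap N y j)"
  unfolding gap_def by (intro bounded_observable_diff bounded_observable_xb)

lemma gap_nonneg_Omega: "y \<in> Omega N \<Longrightarrow> j \<in> {1..N} \<Longrightarrow> 0 \<le> gap N y j"
  unfolding gap_def using xb_mono_Omega[of y N "j - 1" j] by auto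

lemma gap_pair_sum: "i \<in> {1..<N} \<Longrightarrow> xb N y (i + 1) - xb N y (i - 1) = gap N y i + gap N y (i + 1)"
  unfolding gap_def by simp

lemma gap_resample:
  assumes i: "i \<in> {1..<N}" and j: "j \<in> {1..N}"
  shows "gap N (resample N y i u) j =
    (if j = i then (1 - u) * (gap N y i + gap N y (i + 1))
     else if j = i + 1 then u * (gap N y i + gap N y (i + 1)) else gap N y j)"
  using i j unfolding gap_pair_sum[OF i, symmetric] unfolding gap_def xb_resample[OF i]
  by (auto simp: algebra_simps)

lemma resample_mean_gap_product:
  assumes a: "0 < a" and i: "i \<in> {1..<N}" and j: "j \<in> {1..N}" and l: "l \<in> {1..N}"
  shows "resample_mean N a (\<lambda>z. gap N z j * gap N z l) y i =
    (if (j = i \<or> j = i + 1) \<and> (l = i \<or> l = i + 1) then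
        (if j = l then beta_sq_moment a else 1 / 2 - beta_sq_moment a) * (gap N y i + gap N y (i + 1))\<^sup>2
     else if j = i \<or> j = i + 1 then (gap N y i + gap N y (i + 1)) / 2 * gap N y l
     else if l = i \<or> l = i + 1 then gap N y j * ((gap N y i + gap N y (i + 1)) / 2)
     else gap N y j * gap N y l)"
proof -
  define s where "s = gap N y i + gap N y (i + 1)"
  define p where "p m = (if m = i then s else if m = i + 1 then 0 else gap N y m)" for m
  define q where "q m = (if m = i then - s else if m = i + 1 then s else 0)" for m
  have affine: "gap N (resample N y i u) m = p m + q m * u" if "m \<in> {1..N}" for m u
    using gap_resample[OF i that] by (auto simp: p_def q_def s_def algebra_simps)
  have "resample_mean N a (\<lambda>z. gap N z j * gap N z l) y i
      = p j * p l + (p j * q l + q j * p l) / 2 + q j * q l * beta_sq_moment a"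
    by (rule resample_mean_quadratic[OF a]) (simp add: affine[OF j] affine[OF l] power2_eq_square algebra_simps)
  then show ?thesis
    using i by (cases "j = i"; cases "j = i + 1"; cases "l = i"; cases "l = i + 1")
      (simp_all add: p_def q_def s_def power2_eq_square field_simps)
qed

definition gap_product_bound :: "real \<Rightarrow> nat \<Rightarrow> nat \<Rightarrow> real" where
  "gap_product_bound a j l = (if j = l then 4 * (a + 1) / a else 4)"

lemma gap_product_bound_ge_4: "0 < a \<Longrightarrow> 4 \<le> gap_product_bound a j l"
  unfolding gap_product_bound_def by (auto simp: field_simps)

text \<open>The bound is a fixed point of the averaging performed by a resampling step.\<close>

lemma gap_product_bound_fixed_point:
  assumes a: "0 < a"
  shows "beta_sq_moment a * (2 * (4 * (a + 1) / a) + 2 * 4) = 4 * (a + 1) / a"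
    and "(1 / 2 - beta_sq_moment a) * (2 * (4 * (a + 1) / a) + 2 * 4) = 4"
proof -
  have "0 < a * 2 + a * (a * 4)" using a by (simp add: add_pos_pos)
  then show "beta_sq_moment a * (2 * (4 * (a + 1) / a) + 2 * 4) = 4 * (a + 1) / a"
    and "(1 / 2 - beta_sq_moment a) * (2 * (4 * (a + 1) / a) + 2 * 4) = 4"
    using a unfolding beta_sq_moment_def by (simp_all add: field_simps)
qed

lemma integral_resample_mean_gap_product_adjacent_le:
  assumes a: "0 < a" and N: "2 \<le> N" and x: "x \<in> Omega N" and i: "i \<in> {1..<N}"
    and j: "j = i \<or> j = i + 1" and l: "l = i \<or> l = i + 1"
    and IH: "\<And>p q. p \<in> {1..N} \<Longrightarrow> q \<in> {1..N} \<Longrightarrow>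
      (\<integral>y. gap N y p * gap N y q \<partial>kernel_pow N a k x) \<le> gap_product_bound a p q"
  shows "(\<integral>y. resample_mean N a (\<lambda>z. gap N z j * gap N z l) y i \<partial>kernel_pow N a k x)
    \<le> gap_product_bound a j l"
proof -
  let ?E = "\<lambda>f. \<integral>y. f y \<partial>kernel_pow N a k x"
  let ?G = "\<lambda>p q y. gap N y p * gap N y q"
  define c where "c = (if j = l then beta_sq_moment a else 1 / 2 - beta_sq_moment a)"
  have c: "0 \<le> c" using beta_sq_moment_bounds[OF a] by (simp add: c_def)
  have i1: "i \<in> {1..N}" "i + 1 \<in> {1..N}" using i by auto
  have "?E (\<lambda>y. resample_mean N a (?G j l) y i)
      = ?E (\<lambda>y. c * ?G i i y + c * ?G (i + 1) (i + 1) y + (2 * c) * ?G i (i + 1) y)"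
    using j l i1 by (intro Bochner_Integration.integral_cong refl)
      (auto simp: resample_mean_gap_product[OF a i] c_def power2_eq_square algebra_simps)
  also have "\<dots> = c * ?E (?G i i) + c * ?E (?G (i + 1) (i + 1)) + (2 * c) * ?E (?G i (i + 1))"
    using integrable_kernel_pow[OF a N x bounded_observable_mult[OF bounded_observable_gap bounded_observable_gap]]
    by simp
  also have "\<dots> \<le> c * gap_product_bound a i i + c * gap_product_bound a (i + 1) (i + 1)
      + (2 * c) * gap_product_bound a i (i + 1)"
    using c IH i1 by (intro add_mono mult_left_mono) auto
  also have "\<dots> = c * (2 * (4 * (a + 1) / a) + 2 * 4)"
    by (simp add: gap_product_bound_def algebra_simps)
  also have "\<dots> = gap_product_bound a j l"
    using j l gap_product_bound_fixed_point[OF a] by (auto simp: c_def gap_product_bound_def)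
  finally show ?thesis .
qed

lemma integral_resample_mean_gap_product_one_adjacent_le:
  assumes a: "0 < a" and N: "2 \<le> N" and x: "x \<in> Omega N" and i: "i \<in> {1..<N}"
    and j: "j = i \<or> j = i + 1" and l: "l \<in> {1..N}" "l \<noteq> i" "l \<noteq> i + 1"
    and IH: "\<And>p q. p \<in> {1..N} \<Longrightarrow> q \<in> {1..N} \<Longrightarrow>
      (\<integral>y. gap N y p * gap N y q \<partial>kernel_pow N a k x) \<le> gap_product_bound a p q"
  shows "(\<integral>y. resample_mean N a (\<lambda>z. gap N z j * gap N z l) y i \<partial>kernel_pow N a k x)
    \<le> gap_product_bound a j l"
proof -
  let ?E = "\<lambda>f. \<integral>y. f y \<partial>kernel_pow N a k x"
  let ?G = "\<lambda>p q y. gap N y p * gap N y q"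
  have i1: "i \<in> {1..N}" "i + 1 \<in> {1..N}" using i by auto
  have "?E (\<lambda>y. resample_mean N a (?G j l) y i) = ?E (\<lambda>y. ?G i l y / 2 + ?G (i + 1) l y / 2)"
    using j l i1 by (intro Bochner_Integration.integral_cong refl)
      (auto simp: resample_mean_gap_product[OF a i] field_simps)
  also have "\<dots> = ?E (?G i l) / 2 + ?E (?G (i + 1) l) / 2"
    using integrable_kernel_pow[OF a N x bounded_observable_mult[OF bounded_observable_gap bounded_observable_gap]]
    by simp
  also have "\<dots> \<le> gap_product_bound a i l / 2 + gap_product_bound a (i + 1) l / 2"
    using IH i1 l by (intro add_mono divide_right_mono) auto
  also have "\<dots> = gap_product_bound a j l"
    using j l by (auto simp: gap_product_bound_def)
  finally show ?thesis .
qed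

lemma integral_resample_mean_gap_product_le:
  assumes a: "0 < a" and N: "2 \<le> N" and x: "x \<in> Omega N"
    and i: "i \<in> {1..<N}" and j: "j \<in> {1..N}" and l: "l \<in> {1..N}"
    and IH: "\<And>p q. p \<in> {1..N} \<Longrightarrow> q \<in> {1..N} \<Longrightarrow>
      (\<integral>y. gap N y p * gap N y q \<partial>kernel_pow N a k x) \<le> gap_product_bound a p q"
  shows "(\<integral>y. resample_mean N a (\<lambda>z. gap N z j * gap N z l) y i \<partial>kernel_pow N a k x)
    \<le> gap_product_bound a j l"
proof -
  have swap: "resample_mean N a (\<lambda>z. gap N z j * gap N z l) = resample_mean N a (\<lambda>z. gap N z l * gap N z j)"
    "gap_product_bound a j l = gap_product_bound a l j"
    by (simp_all add: mult.commute gap_product_bound_def)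
  consider "j = i \<or> j = i + 1" "l = i \<or> l = i + 1"
    | "j = i \<or> j = i + 1" "l \<noteq> i" "l \<noteq> i + 1"
    | "j \<noteq> i" "j \<noteq> i + 1" "l = i \<or> l = i + 1"
    | "j \<noteq> i" "j \<noteq> i + 1" "l \<noteq> i" "l \<noteq> i + 1"
    by blast
  then show ?thesis
  proof cases
    case 1
    show ?thesis by (rule integral_resample_mean_gap_product_adjacent_le[OF a N x i 1 IH])
  next
    case 2
    show ?thesis by (rule integral_resample_mean_gap_product_one_adjacent_le[OF a N x i 2(1) l 2(2,3) IH])
  next
    case 3
    show ?thesis
      unfolding swap by (rule integral_resample_mean_gap_product_one_adjacent_le[OF a N x i 3(3) j 3(1,2) IH])
  next
    case 4
    then show ?thesis using IH[OF j l] by (simp add: resample_mean_gap_product[OF a i j l])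
  qed
qed

lemma gap_product_moments_bounded:
  assumes a: "0 < a" and N: "2 \<le> N" and x: "x \<in> Omega N"
    and x_gaps: "\<And>j. j \<in> {1..N} \<Longrightarrow> gap N x j \<le> 2"
    and "j \<in> {1..N}" "l \<in> {1..N}"
  shows "(\<integral>y. gap N y j * gap N y l \<partial>kernel_pow N a k x) \<le> gap_product_bound a j l"
  using assms(5,6)
proof (induction k arbitrary: j l)
  case 0
  have "(\<integral>y. gap N y j * gap N y l \<partial>kernel_pow N a 0 x) = gap N x j * gap N x l"
    by (rule integral_kernel_pow_0[OF Omega_in_space[OF x]]) measurable
  also have "\<dots> \<le> 2 * 2"
    using x_gaps gap_nonneg_Omega[OF x] 0 by (intro mult_mono) auto
  also have "\<dots> \<le> gap_product_bound a j l" using gap_product_bound_ge_4[OF a] by simp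
  finally show ?case .
next
  case (Suc k)
  have obs: "bounded_observable N (\<lambda>y. gap N y j * gap N y l)"
    by (intro bounded_observable_mult bounded_observable_gap)
  have "(\<integral>y. gap N y j * gap N y l \<partial>kernel_pow N a (Suc k) x)
      = (\<Sum>i\<in>{1..<N}. \<integral>y. resample_mean N a (\<lambda>z. gap N z j * gap N z l) y i \<partial>kernel_pow N a k x)
        / real (N - 1)"
    by (simp only: integral_kernel_pow_Suc[OF a N x obs] integral_kernel_pow_jump_mean[OF a N x obs])
  also have "\<dots> \<le> (\<Sum>i\<in>{1..<N}. gap_product_bound a j l) / real (N - 1)"
    by (intro divide_right_mono sum_mono integral_resample_mean_gap_product_le[OF a N x _ Suc.prems Suc.IH])
       auto
  also have "\<dots> = gap_product_bound a j l" using N by simp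
  finally show ?case .
qed

section \<open>Trigonometric estimates\<close>

lemma cos_ge_one_minus_sq_half: "0 \<le> x \<Longrightarrow> 1 - x\<^sup>2 / 2 \<le> cos x" for x :: real
proof -
  assume x: "0 \<le> x"
  let ?f = "\<lambda>x. cos x - 1 + x\<^sup>2 / 2"
  have "?f 0 \<le> ?f x"
  proof (rule DERIV_nonneg_imp_nondecreasing[OF x])
    fix u assume u: "0 \<le> u" "u \<le> x"
    have "DERIV ?f u :> (- sin u + u)" by (auto intro!: derivative_eq_intros simp: power2_eq_square)
    moreover have "0 \<le> - sin u + u" using sin_x_le_x[OF u(1)] by simp
    ultimately show "\<exists>y. DERIV ?f u :> y \<and> 0 \<le> y" by blast
  qed
  then show ?thesis by simp
qed

lemma sin_ge_cubic: "0 \<le> x \<Longrightarrow> x - x ^ 3 / 6 \<le> sin x" for x :: real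
proof -
  assume x: "0 \<le> x"
  let ?f = "\<lambda>x. sin x - x + x ^ 3 / 6"
  have "?f 0 \<le> ?f x"
  proof (rule DERIV_nonneg_imp_nondecreasing[OF x])
    fix u assume u: "0 \<le> u" "u \<le> x"
    have "DERIV ?f u :> (cos u - 1 + u\<^sup>2 / 2)" by (auto intro!: derivative_eq_intros simp: power2_eq_square)
    moreover have "0 \<le> cos u - 1 + u\<^sup>2 / 2" using cos_ge_one_minus_sq_half[OF u(1)] by simp
    ultimately show "\<exists>y. DERIV ?f u :> y \<and> 0 \<le> y" by blast
  qed
  then show ?thesis by simp
qed

lemma cos_le_quartic: "0 \<le> x \<Longrightarrow> cos x \<le> 1 - x\<^sup>2 / 2 + x ^ 4 / 24" for x :: real
proof -
  assume x: "0 \<le> x"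
  let ?f = "\<lambda>x. 1 - x\<^sup>2 / 2 + x ^ 4 / 24 - cos x"
  have "?f 0 \<le> ?f x"
  proof (rule DERIV_nonneg_imp_nondecreasing[OF x])
    fix u assume u: "0 \<le> u" "u \<le> x"
    have "DERIV ?f u :> (- u + u ^ 3 / 6 + sin u)"
      by (auto intro!: derivative_eq_intros simp: power2_eq_square power3_eq_cube eval_nat_numeral)
    moreover have "0 \<le> - u + u ^ 3 / 6 + sin u" using sin_ge_cubic[OF u(1)] by simp
    ultimately show "\<exists>y. DERIV ?f u :> y \<and> 0 \<le> y" by blast
  qed
  then show ?thesis by simp
qed

lemma sum_cos_telescope:
  "2 * sin (x / 2) * (\<Sum>i<n. cos (real i * x)) = sin ((2 * real n - 1) * x / 2) + sin (x / 2)"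
proof (induction n)
  case 0
  have "sin (- x / 2) = - sin (x / 2)" by (simp add: minus_divide_left[symmetric])
  then show ?case by simp
next
  case (Suc n)
  have "(2 * real n + 1) * x / 2 = real n * x + x / 2" "(2 * real n - 1) * x / 2 = real n * x - x / 2"
    by (simp_all add: field_simps)
  then have "2 * sin (x / 2) * cos (real n * x) = sin ((2 * real n + 1) * x / 2) - sin ((2 * real n - 1) * x / 2)"
    by (simp only: sin_add sin_diff) simp
  then show ?case using Suc by (simp add: algebra_simps)
qed

lemma sum_cos_roots_of_unity:
  assumes N: "2 \<le> N"
  shows "(\<Sum>i<N. cos (real i * (2 * pi / real N))) = 0"
proof -
  have "(2 * real N - 1) * (2 * pi / real N) / 2 = 2 * pi - pi / real N"
    using N by (simp add: field_simps)
  then have "sin ((2 * real N - 1) * (2 * pi / real N) / 2) = - sin (pi / real N)"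
    by (simp add: sin_diff)
  moreover have "0 < sin (pi / real N)"
    using N by (intro sin_gt_zero) (auto simp: field_simps)
  ultimately show ?thesis
    using sum_cos_telescope[of "2 * pi / real N" N] by simp
qed

section \<open>The sine observable\<close>

definition sine_mode :: "nat \<Rightarrow> nat \<Rightarrow> real" where
  "sine_mode N i = sin (pi * real i / real N)"

definition spectral_gap :: "nat \<Rightarrow> real" where
  "spectral_gap N = 1 - cos (pi / real N)"

definition sine_observable :: "nat \<Rightarrow> (nat \<Rightarrow> real) \<Rightarrow> real" where
  "sine_observable N x = (\<Sum>i\<in>{1..<N}. sine_mode N i * (xb N x i - real i))"

lemma sine_mode_0 [simp]: "sine_mode N 0 = 0"
  by (simp add: sine_mode_def)

lemma sine_mode_N [simp]: "1 \<le> N \<Longrightarrow> sine_mode N N = 0"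
  by (simp add: sine_mode_def)

lemma sum_sine_mode_sq:
  assumes N: "2 \<le> N"
  shows "(\<Sum>i\<in>{1..<N}. (sine_mode N i)\<^sup>2) = real N / 2"
proof -
  have "(\<Sum>i\<in>{1..<N}. (sine_mode N i)\<^sup>2) = (\<Sum>i<N. (sine_mode N i)\<^sup>2)"
    using sum.atLeast_Suc_lessThan[of 0 N "\<lambda>i. (sine_mode N i)\<^sup>2"] N by (simp add: atLeast0LessThan)
  also have "\<dots> = (\<Sum>i<N. (1 - cos (real i * (2 * pi / real N))) / 2)"
  proof (intro sum.cong refl)
    fix i
    have "real i * (2 * pi / real N) = 2 * (pi * real i / real N)" by simp
    then have "cos (real i * (2 * pi / real N)) = 1 - 2 * (sin (pi * real i / real N))\<^sup>2"
      by (simp only: cos_double_sin)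
    then show "(sine_mode N i)\<^sup>2 = (1 - cos (real i * (2 * pi / real N))) / 2"
      unfolding sine_mode_def by simp
  qed
  also have "\<dots> = real N / 2"
    using sum_cos_roots_of_unity[OF N] by (simp add: sum_divide_distrib[symmetric] sum_subtractf)
  finally show ?thesis .
qed

lemma spectral_gap_bounds:
  assumes N: "2 \<le> N"
  shows "0 < spectral_gap N" "spectral_gap N \<le> 1"
proof -
  have p: "0 < pi / real N" "pi / real N \<le> pi / 2" using N by (auto simp: field_simps)
  have "cos (pi / real N) < 1" using cos_monotone_0_pi[of 0 "pi / real N"] p by simp
  moreover have "0 \<le> cos (pi / real N)" using p by (intro cos_ge_zero) auto
  ultimately show "0 < spectral_gap N" "spectral_gap N \<le> 1" unfolding spectral_gap_def by auto
qed

lemma spectral_gap_le: "spectral_gap N \<le> pi\<^sup>2 / (2 * (real N)\<^sup>2)"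
  using cos_ge_one_minus_sq_half[of "pi / real N"] unfolding spectral_gap_def by (simp add: power_divide)

lemma spectral_gap_ge:
  assumes N: "2 \<le> N"
  shows "pi\<^sup>2 / (3 * (real N)\<^sup>2) \<le> spectral_gap N"
proof -
  define x where "x = pi / real N"
  have x0: "0 \<le> x" unfolding x_def by simp
  have "x \<le> pi / 2" unfolding x_def using N by (intro divide_left_mono) auto
  then have "x\<^sup>2 \<le> 2\<^sup>2" using x0 pi_less_4 by (intro power_mono) auto
  then have "x ^ 4 \<le> 4 * x\<^sup>2"
    using mult_right_mono[of "x\<^sup>2" 4 "x\<^sup>2"] by (simp add: power2_eq_square eval_nat_numeral mult.assoc)
  then have "x\<^sup>2 / 3 \<le> 1 - cos x" using cos_le_quartic[OF x0] by simp
  then show ?thesis unfolding spectral_gap_def x_def by (simp add: power_divide)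
qed

lemma sine_observable_measurable [measurable]: "sine_observable N \<in> borel_measurable (state_space N)"
  unfolding sine_observable_def by measurable

lemma bounded_observable_sine_observable: "bounded_observable N (sine_observable N)"
  unfolding sine_observable_def[abs_def]
  by (intro bounded_observable_sum bounded_observable_mult bounded_observable_diff bounded_observable_xb
      bounded_observable_const)

lemma sum_mult_shift_pred:
  fixes s w :: "nat \<Rightarrow> real"
  assumes "w 0 = 0"
  shows "(\<Sum>i\<in>{1..<Suc m}. s i * w (i - 1)) = (\<Sum>j\<in>{1..<Suc m}. s (j + 1) * w j) - s (Suc m) * w m"
  using assms by (induction m) (auto simp: algebra_simps)

lemma sum_mult_shift_succ:
  fixes s w :: "nat \<Rightarrow> real"
  assumes "s 0 = 0"
  shows "(\<Sum>i\<in>{1..<Suc m}. s i * w (i + 1)) = (\<Sum>j\<in>{1..<Suc m}. s (j - 1) * w j) + s m * w (Suc m)"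
  using assms by (induction m) (auto simp: algebra_simps)

lemma sine_mode_recurrence:
  assumes "1 \<le> j"
  shows "sine_mode N (j + 1) + sine_mode N (j - 1) = 2 * cos (pi / real N) * sine_mode N j"
proof -
  have "pi * real (j + 1) / real N = pi * real j / real N + pi / real N"
       "pi * real (j - 1) / real N = pi * real j / real N - pi / real N"
    using assms by (simp_all add: add_divide_distrib diff_divide_distrib distrib_left right_diff_distrib of_nat_diff)
  then show ?thesis unfolding sine_mode_def by (simp add: sin_add sin_diff)
qed

text \<open>The sine modes are eigenvectors of the discrete Dirichlet Laplacian on \<open>{1..<N}\<close>.\<close>

lemma sum_sine_mode_laplacian:
  fixes w :: "nat \<Rightarrow> real"
  assumes N: "2 \<le> N" and w0: "w 0 = 0" and wN: "w N = 0"
  shows "(\<Sum>i\<in>{1..<N}. sine_mode N i * (w (i - 1) + w (i + 1) - 2 * w i))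
    = - 2 * spectral_gap N * (\<Sum>i\<in>{1..<N}. sine_mode N i * w i)"
proof -
  obtain m where m: "N = Suc m" using N by (cases N) auto
  have "(\<Sum>i\<in>{1..<N}. sine_mode N i * (w (i - 1) + w (i + 1) - 2 * w i))
      = (\<Sum>i\<in>{1..<N}. sine_mode N i * w (i - 1)) + (\<Sum>i\<in>{1..<N}. sine_mode N i * w (i + 1))
        - (\<Sum>i\<in>{1..<N}. 2 * sine_mode N i * w i)"
    by (simp add: sum.distrib sum_subtractf algebra_simps)
  also have "\<dots> = (\<Sum>j\<in>{1..<N}. (sine_mode N (j + 1) + sine_mode N (j - 1) - 2 * sine_mode N j) * w j)"
    using sum_mult_shift_pred[of w "sine_mode N" m, OF w0] sum_mult_shift_succ[of "sine_mode N" w m] wN m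
    by (simp add: sum.distrib sum_subtractf algebra_simps)
  also have "\<dots> = (\<Sum>j\<in>{1..<N}. - 2 * spectral_gap N * (sine_mode N j * w j))"
  proof (intro sum.cong refl)
    fix j assume "j \<in> {1..<N}"
    then have "sine_mode N (j + 1) + sine_mode N (j - 1) = 2 * cos (pi / real N) * sine_mode N j"
      by (intro sine_mode_recurrence) auto
    then have "(sine_mode N (j + 1) + sine_mode N (j - 1) - 2 * sine_mode N j) * w j
        = (2 * cos (pi / real N) * sine_mode N j - 2 * sine_mode N j) * w j"
      by (simp only:)
    then show "(sine_mode N (j + 1) + sine_mode N (j - 1) - 2 * sine_mode N j) * w j
        = - 2 * spectral_gap N * (sine_mode N j * w j)"
      by (simp add: spectral_gap_def algebra_simps)
  qed
  finally show ?thesis by (simp add: sum_distrib_left)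
qed

lemma sum_sine_mode_gap_difference:
  assumes N: "2 \<le> N"
  shows "(\<Sum>i\<in>{1..<N}. sine_mode N i * ((gap N y (i + 1) - gap N y i) / 2))
    = - spectral_gap N * sine_observable N y"
proof -
  define w where "w k = xb N y k - real k" for k
  have "gap N y (i + 1) - gap N y i = w (i - 1) + w (i + 1) - 2 * w i" if "i \<in> {1..<N}" for i
    using that by (simp add: gap_def w_def of_nat_diff)
  then have "(\<Sum>i\<in>{1..<N}. sine_mode N i * ((gap N y (i + 1) - gap N y i) / 2))
      = (\<Sum>i\<in>{1..<N}. sine_mode N i * (w (i - 1) + w (i + 1) - 2 * w i)) / 2"
    by (simp add: sum_divide_distrib)
  also have "\<dots> = - spectral_gap N * sine_observable N y"
    by (subst sum_sine_mode_laplacian[OF N]) (simp_all add: sine_observable_def w_def)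
  finally show ?thesis .
qed

lemma sine_observable_resample:
  assumes i: "i \<in> {1..<N}"
  shows "sine_observable N (resample N y i u)
    = sine_observable N y + sine_mode N i * (gap N y (i + 1) - u * (gap N y i + gap N y (i + 1)))"
proof -
  have "sine_observable N (resample N y i u) - sine_observable N y
      = (\<Sum>k\<in>{1..<N}. sine_mode N k * (xb N (resample N y i u) k - xb N y k))"
    unfolding sine_observable_def by (simp add: sum_subtractf[symmetric] algebra_simps)
  also have "\<dots> = sine_mode N i * (xb N (resample N y i u) i - xb N y i)"
    using i by (subst sum.remove[of _ i]) (auto simp: xb_resample[OF i])
  also have "\<dots> = sine_mode N i * (gap N y (i + 1) - u * (gap N y i + gap N y (i + 1)))"
    unfolding xb_resample[OF i] gap_pair_sum[OF i, symmetric] by (simp add: gap_def algebra_simps)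
  finally show ?thesis by simp
qed

lemma jump_mean_sine_observable:
  assumes a: "0 < a" and N: "2 \<le> N"
  shows "jump_mean N a (sine_observable N) y = (1 - spectral_gap N / real (N - 1)) * sine_observable N y"
proof -
  have "resample_mean N a (sine_observable N) y i
      = sine_observable N y + sine_mode N i * ((gap N y (i + 1) - gap N y i) / 2)" if i: "i \<in> {1..<N}" for i
  proof -
    have "resample_mean N a (sine_observable N) y i
        = (sine_observable N y + sine_mode N i * gap N y (i + 1))
          + (- (sine_mode N i * (gap N y i + gap N y (i + 1)))) / 2 + 0 * beta_sq_moment a"
      by (rule resample_mean_quadratic[OF a]) (simp add: sine_observable_resample[OF i] algebra_simps)
    then show ?thesis by (simp add: field_simps)
  qed
  then have "jump_mean N a (sine_observable N) y = (\<Sum>i\<in>{1..<N}. sine_observable N y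
      + sine_mode N i * ((gap N y (i + 1) - gap N y i) / 2)) / real (N - 1)"
    unfolding jump_mean_def by simp
  also have "\<dots> = (real (N - 1) * sine_observable N y - spectral_gap N * sine_observable N y) / real (N - 1)"
    unfolding sum.distrib sum_sine_mode_gap_difference[OF N] by simp
  also have "\<dots> = (1 - spectral_gap N / real (N - 1)) * sine_observable N y"
    using N by (simp add: field_simps)
  finally show ?thesis .
qed

definition mean_sq_displacement :: "nat \<Rightarrow> real \<Rightarrow> nat \<Rightarrow> (nat \<Rightarrow> real) \<Rightarrow> real" where
  "mean_sq_displacement N a i y =
    beta_sq_moment a * (gap N y i + gap N y (i + 1))\<^sup>2 - gap N y i * gap N y (i + 1)"

lemma bounded_observable_mean_sq_displacement:
  "bounded_observable N (mean_sq_displacement N a i)"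
  unfolding mean_sq_displacement_def[abs_def]
  by (intro bounded_observable_diff bounded_observable_mult bounded_observable_power2
      bounded_observable_add bounded_observable_gap bounded_observable_const)

lemma jump_mean_sine_observable_sq:
  assumes a: "0 < a" and N: "2 \<le> N"
  shows "jump_mean N a (\<lambda>z. (sine_observable N z)\<^sup>2) y
    = (1 - 2 * spectral_gap N / real (N - 1)) * (sine_observable N y)\<^sup>2
      + (\<Sum>i\<in>{1..<N}. (sine_mode N i)\<^sup>2 * mean_sq_displacement N a i y) / real (N - 1)"
proof -
  let ?P = "sine_observable N y"
  have "resample_mean N a (\<lambda>z. (sine_observable N z)\<^sup>2) y i
      = ?P\<^sup>2 + 2 * ?P * (sine_mode N i * ((gap N y (i + 1) - gap N y i) / 2))
        + (sine_mode N i)\<^sup>2 * mean_sq_displacement N a i y" if i: "i \<in> {1..<N}" for i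
  proof -
    define c where "c = ?P + sine_mode N i * gap N y (i + 1)"
    define d where "d = sine_mode N i * (gap N y i + gap N y (i + 1))"
    have "resample_mean N a (\<lambda>z. (sine_observable N z)\<^sup>2) y i
        = c\<^sup>2 + (- 2 * c * d) / 2 + d\<^sup>2 * beta_sq_moment a"
      by (rule resample_mean_quadratic[OF a])
         (simp add: sine_observable_resample[OF i] c_def d_def power2_eq_square algebra_simps)
    then show ?thesis
      by (simp add: c_def d_def mean_sq_displacement_def power2_eq_square field_simps)
  qed
  then have "jump_mean N a (\<lambda>z. (sine_observable N z)\<^sup>2) y = (\<Sum>i\<in>{1..<N}. ?P\<^sup>2
      + 2 * ?P * (sine_mode N i * ((gap N y (i + 1) - gap N y i) / 2))
      + (sine_mode N i)\<^sup>2 * mean_sq_displacement N a i y) / real (N - 1)"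
    unfolding jump_mean_def by simp
  also have "\<dots> = (real (N - 1) * ?P\<^sup>2 + 2 * ?P * (- spectral_gap N * ?P)
      + (\<Sum>i\<in>{1..<N}. (sine_mode N i)\<^sup>2 * mean_sq_displacement N a i y)) / real (N - 1)"
    unfolding sum.distrib sum_distrib_left[symmetric] sum_sine_mode_gap_difference[OF N] by simp
  also have "\<dots> = (1 - 2 * spectral_gap N / real (N - 1)) * ?P\<^sup>2
      + (\<Sum>i\<in>{1..<N}. (sine_mode N i)\<^sup>2 * mean_sq_displacement N a i y) / real (N - 1)"
  proof -
    have "(M * P\<^sup>2 + 2 * P * (- g * P) + Z) / M = (1 - 2 * g / M) * P\<^sup>2 + Z / M"
      if "0 < M" for M P g Z :: real
      using that by (simp add: field_simps power2_eq_square)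
    then show ?thesis using N by simp
  qed
  finally show ?thesis .
qed

lemma integral_kernel_pow_sine_observable:
  assumes a: "0 < a" and N: "2 \<le> N" and x: "x \<in> Omega N"
  shows "(\<integral>y. sine_observable N y \<partial>kernel_pow N a k x)
    = (1 - spectral_gap N / real (N - 1)) ^ k * sine_observable N x"
proof (induction k)
  case 0
  show ?case using integral_kernel_pow_0[OF Omega_in_space[OF x] sine_observable_measurable] by simp
next
  case (Suc k)
  have "(\<integral>y. sine_observable N y \<partial>kernel_pow N a (Suc k) x)
      = (\<integral>y. (1 - spectral_gap N / real (N - 1)) * sine_observable N y \<partial>kernel_pow N a k x)"
    unfolding integral_kernel_pow_Suc[OF a N x bounded_observable_sine_observable]
    unfolding jump_mean_sine_observable[OF a N, abs_def] ..
  then show ?case using Suc by simp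
qed

lemma integral_mean_sq_displacement_le:
  assumes a: "0 < a" and N: "2 \<le> N" and x: "x \<in> Omega N"
    and x_gaps: "\<And>j. j \<in> {1..N} \<Longrightarrow> gap N x j \<le> 2" and i: "i \<in> {1..<N}"
  shows "(\<integral>y. mean_sq_displacement N a i y \<partial>kernel_pow N a k x) \<le> 4 * (a + 1) / a"
proof -
  let ?E = "\<lambda>f. \<integral>y. f y \<partial>kernel_pow N a k x"
  let ?G = "\<lambda>p q y. gap N y p * gap N y q"
  let ?m = "beta_sq_moment a"
  have i1: "i \<in> {1..N}" "i + 1 \<in> {1..N}" using i by auto
  have m: "0 \<le> ?m" "?m \<le> 1 / 2" using beta_sq_moment_bounds[OF a] by auto
  have int: "integrable (kernel_pow N a k x) (?G p q)" for p q
    by (intro integrable_kernel_pow[OF a N x] bounded_observable_mult bounded_observable_gap)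
  have bound: "?E (?G p q) \<le> gap_product_bound a p q" if "p \<in> {1..N}" "q \<in> {1..N}" for p q
    by (intro gap_product_moments_bounded[OF a N x] x_gaps that)
  have "?E (mean_sq_displacement N a i)
      = ?E (\<lambda>y. ?m * ?G i i y + ?m * ?G (i + 1) (i + 1) y + (2 * ?m - 1) * ?G i (i + 1) y)"
    unfolding mean_sq_displacement_def
    by (intro Bochner_Integration.integral_cong refl) (simp add: power2_eq_square algebra_simps)
  also have "\<dots> = ?m * ?E (?G i i) + ?m * ?E (?G (i + 1) (i + 1)) + (2 * ?m - 1) * ?E (?G i (i + 1))"
    using int by simp
  also have "\<dots> \<le> ?m * gap_product_bound a i i + ?m * gap_product_bound a (i + 1) (i + 1)"
  proof -
    have "0 \<le> ?E (?G i (i + 1))"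
      using AE_kernel_pow_Omega[OF a N x, of k] i1
      by (intro integral_nonneg_AE) (auto elim!: eventually_mono intro!: mult_nonneg_nonneg gap_nonneg_Omega)
    then have "(2 * ?m - 1) * ?E (?G i (i + 1)) \<le> 0"
      using m by (intro mult_nonpos_nonneg) auto
    moreover have "?m * ?E (?G p p) \<le> ?m * gap_product_bound a p p" if "p \<in> {1..N}" for p
      using bound[OF that that] m by (intro mult_left_mono) auto
    note this[OF i1(1)] this[OF i1(2)]
    ultimately show ?thesis by linarith
  qed
  also have "\<dots> = ?m * (2 * (4 * (a + 1) / a))"
    by (simp add: gap_product_bound_def algebra_simps)
  also have "\<dots> \<le> ?m * (2 * (4 * (a + 1) / a) + 2 * 4)"
    using m by (intro mult_left_mono) auto
  also have "\<dots> = 4 * (a + 1) / a" by (rule gap_product_bound_fixed_point(1)[OF a])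
  finally show ?thesis .
qed

lemma integral_sine_observable_sq_Suc_le:
  assumes a: "0 < a" and N: "2 \<le> N" and x: "x \<in> Omega N"
    and x_gaps: "\<And>j. j \<in> {1..N} \<Longrightarrow> gap N x j \<le> 2"
  shows "(\<integral>y. (sine_observable N y)\<^sup>2 \<partial>kernel_pow N a (Suc k) x)
    \<le> (1 - 2 * spectral_gap N / real (N - 1)) * (\<integral>y. (sine_observable N y)\<^sup>2 \<partial>kernel_pow N a k x)
      + 2 * (a + 1) / a * real N / real (N - 1)"
proof -
  let ?E = "\<lambda>f. \<integral>y. f y \<partial>kernel_pow N a k x"
  let ?b = "1 - 2 * spectral_gap N / real (N - 1)"
  let ?S = "\<lambda>i y. (sine_mode N i)\<^sup>2 * mean_sq_displacement N a i y"
  have int: "integrable (kernel_pow N a k x) f" if "bounded_observable N f" for f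
    using integrable_kernel_pow[OF a N x that] .
  have "(\<integral>y. (sine_observable N y)\<^sup>2 \<partial>kernel_pow N a (Suc k) x)
      = ?E (\<lambda>y. ?b * (sine_observable N y)\<^sup>2 + (\<Sum>i\<in>{1..<N}. ?S i y) / real (N - 1))"
    unfolding integral_kernel_pow_Suc[OF a N x bounded_observable_power2[OF bounded_observable_sine_observable]]
    unfolding jump_mean_sine_observable_sq[OF a N, abs_def] ..
  also have "\<dots> = ?b * ?E (\<lambda>y. (sine_observable N y)\<^sup>2)
      + (\<Sum>i\<in>{1..<N}. (sine_mode N i)\<^sup>2 * ?E (mean_sq_displacement N a i)) / real (N - 1)"
    using int[OF bounded_observable_power2[OF bounded_observable_sine_observable]]
      int[OF bounded_observable_mean_sq_displacement]
    by (simp add: integral_sum)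
  also have "\<dots> \<le> ?b * ?E (\<lambda>y. (sine_observable N y)\<^sup>2)
      + (\<Sum>i\<in>{1..<N}. (sine_mode N i)\<^sup>2 * (4 * (a + 1) / a)) / real (N - 1)"
    using integral_mean_sq_displacement_le[OF a N x x_gaps]
    by (intro add_left_mono divide_right_mono sum_mono mult_left_mono) auto
  also have "(\<Sum>i\<in>{1..<N}. (sine_mode N i)\<^sup>2 * (4 * (a + 1) / a)) = 2 * (a + 1) / a * real N"
    unfolding sum_distrib_right[symmetric] sum_sine_mode_sq[OF N] using a by (simp add: field_simps)
  finally show ?thesis .
qed

lemma integral_sine_observable_sq_le:
  assumes a: "0 < a" and N: "3 \<le> N" and x: "x \<in> Omega N"
    and x_gaps: "\<And>j. j \<in> {1..N} \<Longrightarrow> gap N x j \<le> 2"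
  shows "(\<integral>y. (sine_observable N y)\<^sup>2 \<partial>kernel_pow N a k x)
    \<le> (1 - spectral_gap N / real (N - 1)) ^ (2 * k) * (sine_observable N x)\<^sup>2
      + (a + 1) * real N / (a * spectral_gap N)"
proof (induction k)
  case 0
  have "0 < spectral_gap N" using spectral_gap_bounds N by simp
  then show ?case
    using a integral_kernel_pow_0[OF Omega_in_space[OF x], of "\<lambda>y. (sine_observable N y)\<^sup>2"] by simp
next
  case (Suc k)
  define r where "r = 1 - spectral_gap N / real (N - 1)"
  define b where "b = 1 - 2 * spectral_gap N / real (N - 1)"
  define V where "V = (a + 1) * real N / (a * spectral_gap N)"
  have N1: "0 < real (N - 1)" using N by simp
  have g: "0 < spectral_gap N" "spectral_gap N \<le> 1" using spectral_gap_bounds N by auto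
  have b0: "0 \<le> b" unfolding b_def using g N1 N by (simp add: field_simps)
  have br: "b \<le> r\<^sup>2" unfolding b_def r_def by (simp add: power2_eq_square algebra_simps)
  have "(\<integral>y. (sine_observable N y)\<^sup>2 \<partial>kernel_pow N a (Suc k) x)
      \<le> b * (\<integral>y. (sine_observable N y)\<^sup>2 \<partial>kernel_pow N a k x) + 2 * (a + 1) / a * real N / real (N - 1)"
    unfolding b_def using N by (intro integral_sine_observable_sq_Suc_le[OF a _ x x_gaps]) auto
  also have "\<dots> \<le> b * (r ^ (2 * k) * (sine_observable N x)\<^sup>2 + V) + 2 * (a + 1) / a * real N / real (N - 1)"
    using Suc b0 unfolding r_def V_def by (intro add_right_mono mult_left_mono) auto
  also have "\<dots> = b * (r ^ (2 * k) * (sine_observable N x)\<^sup>2) + V"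
  proof -
    have gen: "(1 - 2 * g / M) * (X + C / (2 * g)) + C / M = (1 - 2 * g / M) * X + C / (2 * g)"
      if "0 < M" "0 < g" for M g C X :: real
      using that by (simp add: field_simps)
    have "V = 2 * (a + 1) / a * real N / (2 * spectral_gap N)"
      unfolding V_def using a g by (simp add: field_simps)
    then show ?thesis unfolding b_def by (simp only: gen[OF N1 g(1)])
  qed
  also have "\<dots> \<le> r\<^sup>2 * (r ^ (2 * k) * (sine_observable N x)\<^sup>2) + V"
    using br by (intro add_right_mono mult_right_mono) auto
  also have "\<dots> = r ^ (2 * Suc k) * (sine_observable N x)\<^sup>2 + V"
    by (simp add: power_add power2_eq_square)
  finally show ?case unfolding r_def V_def .
qed

lemma integral_sine_observable_deviation_sq_le:
  assumes a: "0 < a" and N: "3 \<le> N" and x: "x \<in> Omega N"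
    and x_gaps: "\<And>j. j \<in> {1..N} \<Longrightarrow> gap N x j \<le> 2"
  shows "(\<integral>y. (sine_observable N y - c)\<^sup>2 \<partial>kernel_pow N a k x)
    \<le> ((1 - spectral_gap N / real (N - 1)) ^ k * sine_observable N x - c)\<^sup>2
      + (a + 1) * real N / (a * spectral_gap N)"
proof -
  let ?E = "\<lambda>f. \<integral>y. f y \<partial>kernel_pow N a k x"
  let ?r = "1 - spectral_gap N / real (N - 1)"
  have N2: "2 \<le> N" using N by simp
  interpret prob_space "kernel_pow N a k x" by (rule prob_space_kernel_pow[OF a N2 Omega_in_space[OF x]])
  have "?E (\<lambda>y. (sine_observable N y - c)\<^sup>2) = ?E (\<lambda>y. (sine_observable N y)\<^sup>2) - 2 * c * ?E (sine_observable N) + c\<^sup>2"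
    using integrable_kernel_pow[OF a N2 x bounded_observable_sine_observable]
      integrable_kernel_pow[OF a N2 x bounded_observable_power2[OF bounded_observable_sine_observable]]
    by (simp add: power2_diff prob_space)
  also have "\<dots> \<le> (?r ^ (2 * k) * (sine_observable N x)\<^sup>2 + (a + 1) * real N / (a * spectral_gap N))
      - 2 * c * (?r ^ k * sine_observable N x) + c\<^sup>2"
    unfolding integral_kernel_pow_sine_observable[OF a N2 x]
    using integral_sine_observable_sq_le[OF a N x x_gaps, of k] by simp
  also have "\<dots> = (?r ^ k * sine_observable N x - c)\<^sup>2 + (a + 1) * real N / (a * spectral_gap N)"
    by (simp add: power2_eq_square power_mult algebra_simps)
  finally show ?thesis .
qed

section \<open>Continuous time\<close>

definition poisson_weight :: "real \<Rightarrow> nat \<Rightarrow> real" where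
  "poisson_weight l k = exp (- l) * l ^ k / fact k"

lemma poisson_weight_nonneg: "0 \<le> l \<Longrightarrow> 0 \<le> poisson_weight l k"
  unfolding poisson_weight_def by simp

lemma sums_poisson_weight_power: "(\<lambda>k. poisson_weight l k * z ^ k) sums exp (- l * (1 - z))"
proof -
  have "(\<lambda>n. exp (- l) * ((l * z) ^ n /\<^sub>R fact n)) sums (exp (- l) * exp (l * z))"
    by (rule sums_mult[OF exp_converges])
  moreover have "(\<lambda>n. exp (- l) * ((l * z) ^ n /\<^sub>R fact n)) = (\<lambda>k. poisson_weight l k * z ^ k)"
    by (auto simp: poisson_weight_def power_mult_distrib field_simps)
  moreover have "exp (- l) * exp (l * z) = exp (- l * (1 - z))"
    by (simp add: exp_add[symmetric] algebra_simps)
  ultimately show ?thesis by simp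
qed

lemma sums_poisson_weight: "poisson_weight l sums 1"
  using sums_poisson_weight_power[of l 1] by simp

lemma law_at_poisson_mixture:
  "law_at N a t x = density (count_space UNIV) (\<lambda>k. ennreal (poisson_weight (real (N - 1) * t) k))
    \<bind> (\<lambda>k. kernel_pow N a k x)"
  unfolding law_at_def poisson_weight_def ..

lemma
  assumes a: "0 < a" and N: "2 \<le> N" and x: "x \<in> Omega N"
  shows sets_law_at: "sets (law_at N a t x) = sets (state_space N)"
    and emeasure_law_at: "A \<in> sets (state_space N) \<Longrightarrow> emeasure (law_at N a t x) A
      = (\<Sum>k. ennreal (poisson_weight (real (N - 1) * t) k) * emeasure (kernel_pow N a k x) A)"
proof -
  let ?P = "density (count_space UNIV) (\<lambda>k. ennreal (poisson_weight (real (N - 1) * t) k))"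
  have K: "(\<lambda>k. kernel_pow N a k x) \<in> ?P \<rightarrow>\<^sub>M subprob_algebra (state_space N)"
    unfolding measurable_cong_sets[OF sets_density refl] measurable_count_space_eq1
    using kernel_pow_in_prob_algebra[OF a N Omega_in_space[OF x]]
    by (auto simp: space_prob_algebra space_subprob_algebra intro: prob_space_imp_subprob_space)
  show "sets (law_at N a t x) = sets (state_space N)"
    unfolding law_at_poisson_mixture by (rule sets_bind) (use sets_kernel_pow[OF a N Omega_in_space[OF x]] in auto)
  assume A: "A \<in> sets (state_space N)"
  have "emeasure (law_at N a t x) A = (\<integral>\<^sup>+k. emeasure (kernel_pow N a k x) A \<partial>?P)"
    unfolding law_at_poisson_mixture by (rule emeasure_bind[OF _ K A]) simp
  also have "\<dots> = (\<integral>\<^sup>+k. ennreal (poisson_weight (real (N - 1) * t) k) * emeasure (kernel_pow N a k x) A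
      \<partial>count_space UNIV)"
    by (rule nn_integral_density) simp_all
  finally show "emeasure (law_at N a t x) A
      = (\<Sum>k. ennreal (poisson_weight (real (N - 1) * t) k) * emeasure (kernel_pow N a k x) A)"
    by (simp only: nn_integral_count_space_nat)
qed

lemma prob_space_law_at:
  assumes a: "0 < a" and N: "2 \<le> N" and x: "x \<in> Omega N" and t: "0 \<le> t"
  shows "prob_space (law_at N a t x)"
proof
  let ?l = "real (N - 1) * t"
  have xs: "x \<in> space (state_space N)" using Omega_in_space[OF x] .
  have "space (law_at N a t x) = space (state_space N)"
    using sets_law_at[OF a N x] by (rule sets_eq_imp_space_eq)
  then have "emeasure (law_at N a t x) (space (law_at N a t x)) = (\<Sum>k. ennreal (poisson_weight ?l k))"
    using emeasure_law_at[OF a N x sets.top]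
      prob_space.emeasure_space_1[OF prob_space_kernel_pow[OF a N xs]] space_kernel_pow[OF a N xs]
    by simp
  also have "\<dots> = ennreal 1"
    using t by (intro suminf_ennreal_eq[OF poisson_weight_nonneg sums_poisson_weight]) simp
  finally show "emeasure (law_at N a t x) (space (law_at N a t x)) = 1" by simp
qed

lemma measure_law_at_le_poisson_sum:
  assumes a: "0 < a" and N: "2 \<le> N" and x: "x \<in> Omega N" and t: "0 \<le> t"
    and A: "A \<in> sets (state_space N)"
    and b: "\<And>k. measure (kernel_pow N a k x) A \<le> b k" "\<And>k. 0 \<le> b k"
    and s: "(\<lambda>k. poisson_weight (real (N - 1) * t) k * b k) sums s"
  shows "measure (law_at N a t x) A \<le> s"
proof -
  interpret L: prob_space "law_at N a t x" by (rule prob_space_law_at[OF a N x t])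
  let ?p = "poisson_weight (real (N - 1) * t)"
  have p: "0 \<le> ?p k" for k using t by (intro poisson_weight_nonneg) simp
  have "emeasure (law_at N a t x) A \<le> (\<Sum>k. ennreal (?p k * b k))"
    unfolding emeasure_law_at[OF a N x A]
  proof (intro suminf_le allI)
    fix k
    interpret prob_space "kernel_pow N a k x"
      by (rule prob_space_kernel_pow[OF a N Omega_in_space[OF x]])
    show "ennreal (?p k) * emeasure (kernel_pow N a k x) A \<le> ennreal (?p k * b k)"
      using b(1)[of k] p[of k] b(2)[of k]
      by (simp add: emeasure_eq_measure ennreal_mult[symmetric] mult_left_mono)
  qed auto
  also have "\<dots> = ennreal s"
    using p b(2) by (intro suminf_ennreal_eq[OF _ s]) simp
  finally have "ennreal (measure (law_at N a t x) A) \<le> ennreal s"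
    by (simp add: L.emeasure_eq_measure)
  moreover have "0 \<le> s"
    using s p b(2) unfolding sums_iff by (auto intro!: suminf_nonneg mult_nonneg_nonneg)
  ultimately show ?thesis by simp
qed

lemma sums_poisson_weight_deviation:
  fixes M g t P V :: real
  assumes M: "0 < M"
  shows "(\<lambda>k. poisson_weight (M * t) k * (((1 - g / M) ^ k * P - P * exp (- g * t))\<^sup>2 + V))
    sums (P\<^sup>2 * exp (- 2 * g * t) * (exp (g\<^sup>2 * t / M) - 1) + V)"
proof -
  let ?l = "M * t" and ?r = "1 - g / M" and ?c = "P * exp (- g * t)"
  have S: "(\<lambda>k. P\<^sup>2 * (poisson_weight ?l k * (?r\<^sup>2) ^ k) - 2 * ?c * P * (poisson_weight ?l k * ?r ^ k)
      + (?c\<^sup>2 + V) * poisson_weight ?l k)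
    sums (P\<^sup>2 * exp (- ?l * (1 - ?r\<^sup>2)) - 2 * ?c * P * exp (- ?l * (1 - ?r)) + (?c\<^sup>2 + V) * 1)"
    by (intro sums_add sums_diff sums_mult sums_poisson_weight_power sums_poisson_weight)
  have F: "(\<lambda>k. P\<^sup>2 * (poisson_weight ?l k * (?r\<^sup>2) ^ k) - 2 * ?c * P * (poisson_weight ?l k * ?r ^ k)
      + (?c\<^sup>2 + V) * poisson_weight ?l k)
    = (\<lambda>k. poisson_weight ?l k * ((?r ^ k * P - ?c)\<^sup>2 + V))"
  proof -
    have "(?r\<^sup>2) ^ k = (?r ^ k)\<^sup>2" for k by (metis power_mult mult.commute)
    then show ?thesis by (simp only: fun_eq_iff) (simp add: power2_eq_square algebra_simps)
  qed
  have "?l * (1 - ?r) = g * t" "?l * (1 - ?r\<^sup>2) = 2 * g * t - g\<^sup>2 * t / M"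
    using M by (simp_all add: field_simps power2_eq_square)
  then have e1: "exp (- ?l * (1 - ?r)) = exp (- g * t)"
    and e2: "exp (- ?l * (1 - ?r\<^sup>2)) = exp (- 2 * g * t) * exp (g\<^sup>2 * t / M)"
    by (simp_all add: exp_add[symmetric])
  have e3: "(exp (- g * t))\<^sup>2 = exp (- 2 * g * t)"
    by (simp flip: exp_of_nat_mult)
  have m1: "2 * ?c * P * exp (- ?l * (1 - ?r)) = 2 * P\<^sup>2 * exp (- 2 * g * t)"
    unfolding e1 e3[symmetric] by (simp add: power2_eq_square)
  have m2: "?c\<^sup>2 = P\<^sup>2 * exp (- 2 * g * t)"
    unfolding power_mult_distrib e3 ..
  have X: "P\<^sup>2 * exp (- ?l * (1 - ?r\<^sup>2)) - 2 * ?c * P * exp (- ?l * (1 - ?r)) + (?c\<^sup>2 + V) * 1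
      = P\<^sup>2 * exp (- 2 * g * t) * (exp (g\<^sup>2 * t / M) - 1) + V"
    unfolding e2 m1 m2 by (simp add: algebra_simps)
  show ?thesis using S unfolding F X .
qed

lemma measure_kernel_pow_sine_observable_deviation_le:
  assumes a: "0 < a" and N: "3 \<le> N" and x: "x \<in> Omega N"
    and x_gaps: "\<And>j. j \<in> {1..N} \<Longrightarrow> gap N x j \<le> 2" and w: "0 < w"
  shows "measure (kernel_pow N a k x) {y \<in> space (state_space N). w \<le> \<bar>sine_observable N y - c\<bar>}
    \<le> (((1 - spectral_gap N / real (N - 1)) ^ k * sine_observable N x - c)\<^sup>2
      + (a + 1) * real N / (a * spectral_gap N)) / w\<^sup>2"
proof -
  have N2: "2 \<le> N" using N by simp
  have xs: "x \<in> space (state_space N)" using Omega_in_space[OF x] .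
  interpret K: prob_space "kernel_pow N a k x" by (rule prob_space_kernel_pow[OF a N2 xs])
  have "measure (kernel_pow N a k x) {y \<in> space (state_space N). w \<le> \<bar>sine_observable N y - c\<bar>}
      \<le> (\<integral>y. (sine_observable N y - c)\<^sup>2 \<partial>kernel_pow N a k x) / w\<^sup>2"
    unfolding space_kernel_pow[OF a N2 xs, of k, symmetric]
  proof (rule K.second_moment_method[OF _ _ w])
    show "(\<lambda>y. sine_observable N y - c) \<in> borel_measurable (kernel_pow N a k x)"
      by (rule measurable_kernel_pow[OF a N2 x]) measurable
    show "integrable (kernel_pow N a k x) (\<lambda>y. (sine_observable N y - c)\<^sup>2)"
      by (intro integrable_kernel_pow[OF a N2 x] bounded_observable_power2 bounded_observable_diff
          bounded_observable_sine_observable bounded_observable_const)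
  qed
  also have "\<dots> \<le> (((1 - spectral_gap N / real (N - 1)) ^ k * sine_observable N x - c)\<^sup>2
      + (a + 1) * real N / (a * spectral_gap N)) / w\<^sup>2"
    by (intro divide_right_mono integral_sine_observable_deviation_sq_le[OF a N x x_gaps] zero_le_power2)
  finally show ?thesis .
qed

lemma law_at_sine_observable_concentration:
  assumes a: "0 < a" and N: "3 \<le> N" and x: "x \<in> Omega N"
    and x_gaps: "\<And>j. j \<in> {1..N} \<Longrightarrow> gap N x j \<le> 2" and t: "0 \<le> t" and w: "0 < w"
  shows "measure (law_at N a t x) {y \<in> space (state_space N).
      w \<le> \<bar>sine_observable N y - sine_observable N x * exp (- spectral_gap N * t)\<bar>}
    \<le> ((sine_observable N x)\<^sup>2 * exp (- 2 * spectral_gap N * t)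
        * (exp ((spectral_gap N)\<^sup>2 * t / real (N - 1)) - 1)
      + (a + 1) * real N / (a * spectral_gap N)) / w\<^sup>2"
proof (rule measure_law_at_le_poisson_sum[OF a _ x t])
  let ?c = "sine_observable N x * exp (- spectral_gap N * t)"
  let ?V = "(a + 1) * real N / (a * spectral_gap N)"
  show "2 \<le> N" using N by simp
  show "{y \<in> space (state_space N). w \<le> \<bar>sine_observable N y - ?c\<bar>} \<in> sets (state_space N)"
    by measurable
  show "measure (kernel_pow N a k x) {y \<in> space (state_space N). w \<le> \<bar>sine_observable N y - ?c\<bar>}
      \<le> (((1 - spectral_gap N / real (N - 1)) ^ k * sine_observable N x - ?c)\<^sup>2 + ?V) / w\<^sup>2" for k
    by (rule measure_kernel_pow_sine_observable_deviation_le[OF a N x x_gaps w])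
  show "0 \<le> (((1 - spectral_gap N / real (N - 1)) ^ k * sine_observable N x - ?c)\<^sup>2 + ?V) / w\<^sup>2" for k
    using a spectral_gap_bounds[of N] N by simp
  show "(\<lambda>k. poisson_weight (real (N - 1) * t) k
      * ((((1 - spectral_gap N / real (N - 1)) ^ k * sine_observable N x - ?c)\<^sup>2 + ?V) / w\<^sup>2))
    sums (((sine_observable N x)\<^sup>2 * exp (- 2 * spectral_gap N * t)
        * (exp ((spectral_gap N)\<^sup>2 * t / real (N - 1)) - 1) + ?V) / w\<^sup>2)"
    using sums_divide[OF sums_poisson_weight_deviation, of "real (N - 1)" t "spectral_gap N"
        "sine_observable N x" ?V "w\<^sup>2"] N
    by simp
qed

section \<open>Starting configurations with prescribed sine observable\<close>

definition sine_profile :: "nat \<Rightarrow> real \<Rightarrow> nat \<Rightarrow> real" where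
  "sine_profile N \<theta> = (\<lambda>i\<in>{1..<N}. real i + \<theta> * (real N / pi) * sine_mode N i)"

lemma xb_sine_profile:
  "1 \<le> N \<Longrightarrow> j \<le> N \<Longrightarrow> xb N (sine_profile N \<theta>) j = real j + \<theta> * (real N / pi) * sine_mode N j"
  by (auto simp: xb_def sine_profile_def sine_mode_def)

lemma sine_mode_diff_le:
  assumes "1 \<le> N" "1 \<le> j"
  shows "\<bar>sine_mode N j - sine_mode N (j - 1)\<bar> \<le> pi / real N"
proof -
  have e: "pi * real j / real N - pi * real (j - 1) / real N = pi / real N"
    using assms by (simp add: of_nat_diff field_simps)
  have "\<bar>sine_mode N j - sine_mode N (j - 1)\<bar>
      = \<bar>2 * sin (pi / real N / 2) * cos ((pi * real j / real N + pi * real (j - 1) / real N) / 2)\<bar>"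
    unfolding sine_mode_def sin_diff_sin e ..
  also have "\<dots> \<le> 2 * \<bar>sin (pi / real N / 2)\<bar>"
    unfolding abs_mult by (simp add: mult_left_le)
  also have "\<dots> \<le> pi / real N"
    using abs_sin_x_le_abs_x[of "pi / real N / 2"] by simp
  finally show ?thesis .
qed

lemma gap_sine_profile_bounds:
  assumes N: "1 \<le> N" and j: "j \<in> {1..N}" and \<theta>: "0 \<le> \<theta>" "\<theta> \<le> 1"
  shows "0 \<le> gap N (sine_profile N \<theta>) j" "gap N (sine_profile N \<theta>) j \<le> 2"
proof -
  have "xb N (sine_profile N \<theta>) j = real j + \<theta> * (real N / pi) * sine_mode N j"
    "xb N (sine_profile N \<theta>) (j - 1) = real j - 1 + \<theta> * (real N / pi) * sine_mode N (j - 1)"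
    using xb_sine_profile[OF N, of j \<theta>] xb_sine_profile[OF N, of "j - 1" \<theta>] j
    by (auto simp: of_nat_diff)
  then have "gap N (sine_profile N \<theta>) j = 1 + \<theta> * (real N / pi) * (sine_mode N j - sine_mode N (j - 1))"
    unfolding gap_def by (simp add: algebra_simps)
  moreover have "\<bar>\<theta> * (real N / pi) * (sine_mode N j - sine_mode N (j - 1))\<bar> \<le> 1 * (real N / pi) * (pi / real N)"
    unfolding abs_mult using \<theta> sine_mode_diff_le[OF N, of j] j by (intro mult_mono) auto
  then have "\<bar>\<theta> * (real N / pi) * (sine_mode N j - sine_mode N (j - 1))\<bar> \<le> 1"
    using N by simp
  ultimately show "0 \<le> gap N (sine_profile N \<theta>) j" "gap N (sine_profile N \<theta>) j \<le> 2"
    unfolding abs_le_iff by linarith+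
qed

lemma sine_profile_in_Omega:
  assumes N: "1 \<le> N" and \<theta>: "0 \<le> \<theta>" "\<theta> \<le> 1"
  shows "sine_profile N \<theta> \<in> Omega N"
  unfolding Omega_def
  using gap_sine_profile_bounds(1)[OF N _ \<theta>] by (auto simp: space_state_space sine_profile_def gap_def)

lemma sine_observable_sine_profile:
  assumes N: "2 \<le> N"
  shows "sine_observable N (sine_profile N \<theta>) = \<theta> * ((real N)\<^sup>2 / (2 * pi))"
proof -
  have "sine_observable N (sine_profile N \<theta>) = (\<Sum>i\<in>{1..<N}. \<theta> * (real N / pi) * (sine_mode N i)\<^sup>2)"
    unfolding sine_observable_def using N by (intro sum.cong refl) (simp add: xb_sine_profile power2_eq_square)
  also have "\<dots> = \<theta> * (real N / pi) * (\<Sum>i\<in>{1..<N}. (sine_mode N i)\<^sup>2)"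
    by (rule sum_distrib_left[symmetric])
  also have "\<dots> = \<theta> * ((real N)\<^sup>2 / (2 * pi))"
    unfolding sum_sine_mode_sq[OF N] by (simp add: power2_eq_square)
  finally show ?thesis .
qed

section \<open>Total variation distance\<close>

lemma pi_weight_measurable [measurable]: "pi_weight N a \<in> borel_measurable (state_space N)"
  unfolding pi_weight_def by measurable

lemma
  shows sets_pi_measure: "sets (pi_measure N a) = sets (state_space N)"
    and emeasure_pi_measure_space_le_1: "emeasure (pi_measure N a) (space (pi_measure N a)) \<le> 1"
proof -
  show "sets (pi_measure N a) = sets (state_space N)" by (simp add: pi_measure_def)
  define Z where "Z = (\<integral>\<^sup>+ y. pi_weight N a y \<partial>state_space N)"
  have "emeasure (pi_measure N a) (space (pi_measure N a)) = (\<integral>\<^sup>+ y. pi_weight N a y / Z \<partial>state_space N)"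
    unfolding pi_measure_def Z_def[symmetric] by (simp add: emeasure_density)
  also have "\<dots> = Z / Z" unfolding Z_def by (rule nn_integral_divide) measurable
  also have "\<dots> \<le> 1"
  proof (cases "Z = 0 \<or> Z = top")
    case True
    then show ?thesis by (auto simp: divide_ennreal_def)
  next
    case False
    then show ?thesis by (simp add: top.not_eq_extremum)
  qed
  finally show "emeasure (pi_measure N a) (space (pi_measure N a)) \<le> 1" .
qed

lemma finite_measure_pi_measure: "finite_measure (pi_measure N a)"
  using emeasure_pi_measure_space_le_1[of N a] by (intro finite_measureI) (auto simp: top_unique)

lemma measure_pi_measure_le_1: "measure (pi_measure N a) A \<le> 1"
proof -
  interpret finite_measure "pi_measure N a" by (rule finite_measure_pi_measure)
  have "measure (pi_measure N a) A \<le> measure (pi_measure N a) (space (pi_measure N a))"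
    by (cases "A \<in> sets (pi_measure N a)") (auto intro: bounded_measure simp: measure_notin_sets)
  also have "\<dots> \<le> 1"
    using emeasure_pi_measure_space_le_1[of N a] by (simp add: emeasure_eq_measure ennreal_le_1)
  finally show ?thesis .
qed

lemma tv_dist_ge:
  assumes M: "prob_space M" and A: "A \<in> sets M" and M': "\<And>B. measure M' B \<le> 1"
  shows "measure M A - measure M' A \<le> tv_dist M M'"
  unfolding tv_dist_def
proof (rule order_trans[OF _ cSUP_upper[OF A]])
  show "bdd_above ((\<lambda>A. \<bar>measure M A - measure M' A\<bar>) ` sets M)"
  proof (rule bdd_aboveI2)
    fix B
    show "\<bar>measure M B - measure M' B\<bar> \<le> 1"
      using prob_space.prob_le_1[OF M, of B] M'[of B] measure_nonneg[of M B] measure_nonneg[of M' B]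
      unfolding abs_le_iff by linarith
  qed
qed simp

lemma tv_dist_le_1:
  assumes M: "prob_space M" and M': "\<And>B. measure M' B \<le> 1"
  shows "tv_dist M M' \<le> 1"
  unfolding tv_dist_def
proof (rule cSUP_least)
  show "sets M \<noteq> {}" using sets.empty_sets by blast
  fix B
  show "\<bar>measure M B - measure M' B\<bar> \<le> 1"
    using prob_space.prob_le_1[OF M, of B] M'[of B] measure_nonneg[of M B] measure_nonneg[of M' B]
    unfolding abs_le_iff by linarith
qed

lemma ex_tv_dist_ge_disjoint_family:
  fixes A :: "nat \<Rightarrow> 'a set" and M :: "nat \<Rightarrow> 'a measure"
  assumes P: "finite_measure P" and P_le_1: "\<And>B. measure P B \<le> 1" and m: "0 < m"
    and disj: "disjoint_family_on A {1..m}" and A: "\<And>j. j \<in> {1..m} \<Longrightarrow> A j \<in> sets P"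
    and M: "\<And>j. j \<in> {1..m} \<Longrightarrow> prob_space (M j)" "\<And>j. j \<in> {1..m} \<Longrightarrow> sets (M j) = sets P"
    and MA: "\<And>j. j \<in> {1..m} \<Longrightarrow> 1 - \<delta> \<le> measure (M j) (A j)"
  shows "\<exists>j\<in>{1..m}. 1 - \<delta> - 1 / real m \<le> tv_dist (M j) P"
proof (rule ccontr)
  assume "\<not> ?thesis"
  then have "1 / real m < measure P (A j)" if j: "j \<in> {1..m}" for j
    using tv_dist_ge[OF M(1)[OF j] _ P_le_1, of "A j"] A[OF j] M(2)[OF j] MA[OF j] j by force
  then have "(\<Sum>j\<in>{1..m}. 1 / real m) < (\<Sum>j\<in>{1..m}. measure P (A j))"
    using m by (intro sum_strict_mono) auto
  also have "\<dots> = measure P (\<Union>j\<in>{1..m}. A j)"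
    using disj A by (intro finite_measure.finite_measure_finite_Union[OF P, symmetric]) auto
  also have "\<dots> \<le> 1" by (rule P_le_1)
  finally show False using m by simp
qed

lemma exp_gap_sq_time_sub_one_le:
  assumes N: "3 \<le> N" and t: "0 \<le> t" and tT: "spectral_gap N * t \<le> ln (real N) / 2"
  shows "exp ((spectral_gap N)\<^sup>2 * t / real (N - 1)) - 1 \<le> pi\<^sup>2 / (2 * (real N)\<^sup>2)"
proof -
  define g where "g = spectral_gap N"
  define z where "z = g\<^sup>2 * t / real (N - 1)"
  have N1: "0 < real (N - 1)" "real (N - 1) = real N - 1" using N by (auto simp: of_nat_diff)
  have g: "0 < g" "g \<le> pi\<^sup>2 / (2 * (real N)\<^sup>2)"
    using spectral_gap_bounds[of N] spectral_gap_le[of N] N by (auto simp: g_def)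
  have z0: "0 \<le> z" unfolding z_def using t N1 by simp
  have "g * t \<le> real (N - 1) / 2"
    using tT ln_le_minus_one[of "real N"] N N1(2) unfolding g_def by simp
  then have "z \<le> g * (real (N - 1) / 2) / real (N - 1)"
    unfolding z_def power2_eq_square using g(1) N1(1) mult_left_mono[of "g * t" _ g]
    by (intro divide_right_mono) (auto simp: mult.assoc)
  also have "\<dots> = g / 2" using N1(1) by (simp del: of_nat_diff)
  also have "\<dots> \<le> pi\<^sup>2 / (4 * (real N)\<^sup>2)" using g(2) by simp
  finally have zU: "z \<le> pi\<^sup>2 / (4 * (real N)\<^sup>2)" .
  moreover have "pi\<^sup>2 / (4 * (real N)\<^sup>2) \<le> 1 / 2"
  proof -
    have "pi\<^sup>2 \<le> 4\<^sup>2" "3\<^sup>2 \<le> (real N)\<^sup>2"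
      using pi_less_4 N by (intro power_mono; simp)+
    then have "pi\<^sup>2 / (4 * (real N)\<^sup>2) \<le> 4\<^sup>2 / (4 * 3\<^sup>2)"
      by (intro frac_le) auto
    then show ?thesis by simp
  qed
  ultimately have "exp z - 1 \<le> 2 * z" using exp_bound_lemma[of z] z0 by simp
  then show ?thesis using zU unfolding z_def g_def by simp
qed

lemma sine_variance_bound_le:
  assumes a: "0 < a" and N: "2 \<le> N" and tT: "spectral_gap N * t \<le> ln (real N) / 2 - C"
  shows "(a + 1) * real N / (a * spectral_gap N)
    \<le> 12 * (a + 1) / a * exp (- 2 * C) * (((real N)\<^sup>2 / (2 * pi))\<^sup>2 * exp (- 2 * spectral_gap N * t))"
proof -
  define g where "g = spectral_gap N"
  have Npos: "0 < real N" using N by simp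
  have g: "0 < g" "pi\<^sup>2 / (3 * (real N)\<^sup>2) \<le> g"
    using spectral_gap_bounds[OF N] spectral_gap_ge[OF N] by (auto simp: g_def)
  have "exp (2 * g * t) \<le> exp (ln (real N) - 2 * C)"
    using tT unfolding g_def by simp
  then have e: "1 \<le> real N * exp (- 2 * C) * exp (- 2 * g * t)"
    using Npos by (simp add: exp_diff exp_minus field_simps mult_exp_exp)
  have "(a + 1) * real N / (a * g) \<le> (a + 1) * real N / (a * (pi\<^sup>2 / (3 * (real N)\<^sup>2)))"
    using a g Npos by (intro divide_left_mono mult_left_mono) auto
  also have "\<dots> = 12 * (a + 1) / a * (((real N)\<^sup>2 / (2 * pi))\<^sup>2 / real N)"
    using Npos a by (simp add: field_simps power2_eq_square)
  also have "\<dots> \<le> 12 * (a + 1) / a * (((real N)\<^sup>2 / (2 * pi))\<^sup>2 / real N)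
      * (real N * exp (- 2 * C) * exp (- 2 * g * t))"
    using mult_left_mono[OF e, of "12 * (a + 1) / a * (((real N)\<^sup>2 / (2 * pi))\<^sup>2 / real N)"] a
    by simp
  also have "\<dots> = 12 * (a + 1) / a * exp (- 2 * C) * (((real N)\<^sup>2 / (2 * pi))\<^sup>2 * exp (- 2 * g * t))"
    using Npos a by (simp add: field_simps)
  finally show ?thesis unfolding g_def .
qed

lemma concentration_error_le:
  assumes a: "0 < a" and N: "3 \<le> N" and m: "1 \<le> m"
    and large_N: "8 * (real m)\<^sup>2 * pi\<^sup>2 \<le> \<epsilon> * (real N)\<^sup>2"
    and C: "48 * (real m)\<^sup>2 * (a + 1) / a * exp (- 2 * C) \<le> \<epsilon> / 4" and C0: "0 \<le> C"
    and t: "0 \<le> t" and tT: "spectral_gap N * t \<le> ln (real N) / 2 - C"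
  defines "K \<equiv> (real N)\<^sup>2 / (2 * pi) * exp (- spectral_gap N * t)"
  assumes P: "P\<^sup>2 * exp (- 2 * spectral_gap N * t) \<le> K\<^sup>2"
  shows "(P\<^sup>2 * exp (- 2 * spectral_gap N * t) * (exp ((spectral_gap N)\<^sup>2 * t / real (N - 1)) - 1)
      + (a + 1) * real N / (a * spectral_gap N)) / (K / (2 * real m))\<^sup>2 \<le> \<epsilon> / 2"
proof -
  let ?z = "(spectral_gap N)\<^sup>2 * t / real (N - 1)"
  have K0: "0 < K" unfolding K_def using N by simp
  have "0 \<le> ?z" using t by simp
  then have z: "0 \<le> exp ?z - 1" "exp ?z - 1 \<le> pi\<^sup>2 / (2 * (real N)\<^sup>2)"
    using exp_gap_sq_time_sub_one_le[OF N t] tT C0 by auto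
  have V: "(a + 1) * real N / (a * spectral_gap N) \<le> 12 * (a + 1) / a * exp (- 2 * C) * K\<^sup>2"
    using sine_variance_bound_le[OF a _ tT] N unfolding K_def power_mult_distrib
    by (simp flip: exp_of_nat_mult add: mult.assoc)
  have "(P\<^sup>2 * exp (- 2 * spectral_gap N * t) * (exp ?z - 1) + (a + 1) * real N / (a * spectral_gap N))
        / (K / (2 * real m))\<^sup>2
      \<le> (K\<^sup>2 * (pi\<^sup>2 / (2 * (real N)\<^sup>2)) + 12 * (a + 1) / a * exp (- 2 * C) * K\<^sup>2) / (K / (2 * real m))\<^sup>2"
    using P z V by (intro divide_right_mono add_mono mult_mono) auto
  also have "\<dots> = 4 * (real m)\<^sup>2 * (pi\<^sup>2 / (2 * (real N)\<^sup>2)) + 4 * (12 * (real m)\<^sup>2 * (a + 1) / a * exp (- 2 * C))"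
    using K0 m by (simp add: field_simps power2_eq_square)
  also have "\<dots> \<le> \<epsilon> / 4 + \<epsilon> / 4"
    using large_N C N by (intro add_mono) (simp_all add: field_simps)
  finally show ?thesis by simp
qed

lemma law_at_sine_profile_window:
  assumes a: "0 < a" and N: "3 \<le> N" and m: "1 \<le> m"
    and large_N: "8 * (real m)\<^sup>2 * pi\<^sup>2 \<le> \<epsilon> * (real N)\<^sup>2"
    and C: "48 * (real m)\<^sup>2 * (a + 1) / a * exp (- 2 * C) \<le> \<epsilon> / 4" and C0: "0 \<le> C"
    and t: "0 \<le> t" and tT: "spectral_gap N * t \<le> ln (real N) / 2 - C"
    and \<theta>: "0 \<le> \<theta>" "\<theta> \<le> 1"
  defines "K \<equiv> (real N)\<^sup>2 / (2 * pi) * exp (- spectral_gap N * t)"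
  shows "1 - \<epsilon> / 2 \<le> measure (law_at N a t (sine_profile N \<theta>))
    {y \<in> space (state_space N). \<bar>sine_observable N y - \<theta> * K\<bar> < K / (2 * real m)}"
proof -
  let ?x = "sine_profile N \<theta>"
  let ?L = "law_at N a t ?x"
  let ?bad = "{y \<in> space (state_space N). K / (2 * real m) \<le> \<bar>sine_observable N y - \<theta> * K\<bar>}"
  have N2: "2 \<le> N" using N by simp
  have x: "?x \<in> Omega N" using sine_profile_in_Omega[OF _ \<theta>] N by simp
  interpret L: prob_space ?L by (rule prob_space_law_at[OF a N2 x t])
  have x_gaps: "\<And>j. j \<in> {1..N} \<Longrightarrow> gap N ?x j \<le> 2" using gap_sine_profile_bounds(2)[OF _ _ \<theta>] N by simp
  have K0: "0 < K" unfolding K_def using N by simp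
  have Px: "sine_observable N ?x * exp (- spectral_gap N * t) = \<theta> * K"
    unfolding sine_observable_sine_profile[OF N2] K_def by simp
  have "(sine_observable N ?x)\<^sup>2 * exp (- 2 * spectral_gap N * t) = (\<theta> * K)\<^sup>2"
    unfolding Px[symmetric] power_mult_distrib by (simp flip: exp_of_nat_mult)
  also have "\<dots> \<le> K\<^sup>2" using \<theta> K0 by (simp add: power_mult_distrib mult_left_le_one_le power_le_one)
  finally have error: "((sine_observable N ?x)\<^sup>2 * exp (- 2 * spectral_gap N * t)
      * (exp ((spectral_gap N)\<^sup>2 * t / real (N - 1)) - 1) + (a + 1) * real N / (a * spectral_gap N))
      / (K / (2 * real m))\<^sup>2 \<le> \<epsilon> / 2"
    using concentration_error_le[OF a N m large_N C C0 t tT] unfolding K_def by blast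
  have "measure ?L ?bad \<le> ((sine_observable N ?x)\<^sup>2 * exp (- 2 * spectral_gap N * t)
      * (exp ((spectral_gap N)\<^sup>2 * t / real (N - 1)) - 1) + (a + 1) * real N / (a * spectral_gap N))
      / (K / (2 * real m))\<^sup>2"
    unfolding Px[symmetric]
    by (rule law_at_sine_observable_concentration[OF a N x _ t]) (use x_gaps K0 m in auto)
  with error have "measure ?L ?bad \<le> \<epsilon> / 2" by linarith
  moreover have "space ?L = space (state_space N)"
    by (rule sets_eq_imp_space_eq[OF sets_law_at[OF a N2 x]])
  then have "{y \<in> space (state_space N). \<bar>sine_observable N y - \<theta> * K\<bar> < K / (2 * real m)} = space ?L - ?bad"
    by auto
  moreover have "?bad \<in> L.events"
    unfolding sets_law_at[OF a N2 x] by measurable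
  ultimately show ?thesis using L.prob_compl by simp
qed

lemma mixing_time_nonneg: "0 \<le> mixing_time N a e"
  unfolding mixing_time_def by (rule Inf_greatest) auto

lemma ereal_le_mixing_time_of_nonpos: "x \<le> 0 \<Longrightarrow> ereal x \<le> mixing_time N a e"
  using mixing_time_nonneg[of N a e] order_trans[of "ereal x" 0] by (simp add: zero_ereal_def)

lemma disjoint_family_on_windows:
  fixes f :: "'a \<Rightarrow> real"
  assumes K: "0 < K"
  shows "disjoint_family_on (\<lambda>j. {y \<in> S. \<bar>f y - real j / real m * K\<bar> < K / (2 * real m)}) {1..m}"
  unfolding disjoint_family_on_def
proof (intro ballI impI, rule ccontr)
  fix i j assume ij: "i \<in> {1..m}" "j \<in> {1..m}" "i \<noteq> j"
    and "{y \<in> S. \<bar>f y - real i / real m * K\<bar> < K / (2 * real m)}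
      \<inter> {y \<in> S. \<bar>f y - real j / real m * K\<bar> < K / (2 * real m)} \<noteq> {}"
  then obtain y where "\<bar>f y - real i / real m * K\<bar> < K / (2 * real m)"
    "\<bar>f y - real j / real m * K\<bar> < K / (2 * real m)"
    by auto
  then have "\<bar>real i / real m * K - real j / real m * K\<bar> < 2 * (K / (2 * real m))"
    unfolding abs_less_iff by linarith
  moreover have "real i / real m * K - real j / real m * K = (real i - real j) * (K / real m)"
    by (simp add: divide_inverse algebra_simps)
  then have "\<bar>real i / real m * K - real j / real m * K\<bar> = \<bar>real i - real j\<bar> * (K / real m)"
    using K by (simp add: abs_mult)
  moreover have "1 \<le> \<bar>real i - real j\<bar>" using \<open>i \<noteq> j\<close> by linarith
  ultimately show False using K ij by (simp add: field_simps)
qed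

lemma ex_sine_profile_tv_dist_ge:
  assumes a: "0 < a" and N: "3 \<le> N" and m: "1 \<le> m"
    and large_N: "8 * (real m)\<^sup>2 * pi\<^sup>2 \<le> \<epsilon> * (real N)\<^sup>2"
    and C: "48 * (real m)\<^sup>2 * (a + 1) / a * exp (- 2 * C) \<le> \<epsilon> / 4" and C0: "0 \<le> C"
    and t: "0 \<le> t" and tT: "spectral_gap N * t \<le> ln (real N) / 2 - C"
  shows "\<exists>j\<in>{1..m}. 1 - \<epsilon> / 2 - 1 / real m
    \<le> tv_dist (law_at N a t (sine_profile N (real j / real m))) (pi_measure N a)"
proof -
  have N2: "2 \<le> N" using N by simp
  define K where "K = (real N)\<^sup>2 / (2 * pi) * exp (- spectral_gap N * t)"
  define A where "A j = {y \<in> space (state_space N).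
    \<bar>sine_observable N y - real j / real m * K\<bar> < K / (2 * real m)}" for j
  have K0: "0 < K" unfolding K_def using N by simp
  have x: "sine_profile N (real j / real m) \<in> Omega N" if "j \<in> {1..m}" for j
    using that N by (intro sine_profile_in_Omega) auto
  show ?thesis
  proof (rule ex_tv_dist_ge_disjoint_family[OF finite_measure_pi_measure measure_pi_measure_le_1])
    show "0 < m" "disjoint_family_on A {1..m}"
      using m disjoint_family_on_windows[OF K0] unfolding A_def by auto
    show "A j \<in> sets (pi_measure N a)" for j
      unfolding A_def sets_pi_measure by measurable
    fix j assume j: "j \<in> {1..m}"
    show "prob_space (law_at N a t (sine_profile N (real j / real m)))"
      by (rule prob_space_law_at[OF a N2 x[OF j] t])
    show "sets (law_at N a t (sine_profile N (real j / real m))) = sets (pi_measure N a)"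
      unfolding sets_law_at[OF a N2 x[OF j]] sets_pi_measure ..
    show "1 - \<epsilon> / 2 \<le> measure (law_at N a t (sine_profile N (real j / real m))) (A j)"
      unfolding A_def K_def using j
      by (intro law_at_sine_profile_window[OF a N m large_N C C0 t tT]) auto
  qed
qed

lemma mixing_time_ge:
  assumes a: "0 < a" and N: "3 \<le> N" and m: "1 \<le> m" and m_large: "2 \<le> real m * \<epsilon>"
    and large_N: "8 * (real m)\<^sup>2 * pi\<^sup>2 \<le> \<epsilon> * (real N)\<^sup>2"
    and C: "48 * (real m)\<^sup>2 * (a + 1) / a * exp (- 2 * C) \<le> \<epsilon> / 4" and C0: "0 \<le> C"
  shows "ereal ((ln (real N) / 2 - C) / spectral_gap N) \<le> mixing_time N a (1 - \<epsilon>)"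
  unfolding mixing_time_def
proof (rule Inf_greatest, safe)
  fix t assume t: "0 \<le> t"
    and mixed: "(SUP x\<in>Omega N. tv_dist (law_at N a t x) (pi_measure N a)) < 1 - \<epsilon>"
  have N2: "2 \<le> N" using N by simp
  have g: "0 < spectral_gap N" using spectral_gap_bounds[OF N2] by simp
  show "ereal ((ln (real N) / 2 - C) / spectral_gap N) \<le> ereal t"
  proof (rule ccontr)
    assume "\<not> ?thesis"
    then have "spectral_gap N * t \<le> ln (real N) / 2 - C" using g by (simp add: field_simps)
    then obtain j where j: "j \<in> {1..m}" and tv: "1 - \<epsilon> / 2 - 1 / real m
        \<le> tv_dist (law_at N a t (sine_profile N (real j / real m))) (pi_measure N a)"
      using ex_sine_profile_tv_dist_ge[OF a N m large_N C C0 t] by blast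
    have "1 / real m \<le> \<epsilon> / 2" using m_large m by (simp add: field_simps)
    moreover have "tv_dist (law_at N a t (sine_profile N (real j / real m))) (pi_measure N a)
        \<le> (SUP x\<in>Omega N. tv_dist (law_at N a t x) (pi_measure N a))"
      using j m N
      by (intro cSUP_upper bdd_aboveI2[where M=1] tv_dist_le_1 prob_space_law_at[OF a N2 _ t]
          measure_pi_measure_le_1 sine_profile_in_Omega) auto
    ultimately show False using tv mixed by linarith
  qed
qed

lemma mixing_time_ge_log:
  assumes a: "0 < a" and N: "3 \<le> N" and m: "1 \<le> m" and m_large: "2 \<le> real m * \<epsilon>"
    and large_N: "8 * (real m)\<^sup>2 * pi\<^sup>2 \<le> \<epsilon> * (real N)\<^sup>2"
    and C: "48 * (real m)\<^sup>2 * (a + 1) / a * exp (- 2 * C) \<le> \<epsilon> / 4" and C0: "0 \<le> C"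
  shows "ereal ((real N)\<^sup>2 / pi\<^sup>2 * (ln (real N) - 2 * C)) \<le> mixing_time N a (1 - \<epsilon>)"
proof (cases "0 \<le> ln (real N) - 2 * C")
  case True
  have g: "0 < spectral_gap N" "spectral_gap N \<le> pi\<^sup>2 / (2 * (real N)\<^sup>2)"
    using spectral_gap_bounds[of N] spectral_gap_le[of N] N by auto
  then have "2 * (real N)\<^sup>2 / pi\<^sup>2 \<le> 1 / spectral_gap N"
    using N by (simp add: field_simps)
  have "(real N)\<^sup>2 / pi\<^sup>2 * (ln (real N) - 2 * C) = (ln (real N) / 2 - C) * (2 * (real N)\<^sup>2 / pi\<^sup>2)"
    by (simp add: field_simps)
  also have "\<dots> \<le> (ln (real N) / 2 - C) * (1 / spectral_gap N)"
    using True \<open>2 * (real N)\<^sup>2 / pi\<^sup>2 \<le> 1 / spectral_gap N\<close> by (intro mult_left_mono) auto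
  finally have "(real N)\<^sup>2 / pi\<^sup>2 * (ln (real N) - 2 * C) \<le> (ln (real N) / 2 - C) / spectral_gap N"
    by simp
  then show ?thesis
    using mixing_time_ge[OF a N m m_large large_N C C0] by (meson ereal_less_eq(3) order_trans)
next
  case False
  then show ?thesis by (intro ereal_le_mixing_time_of_nonpos mult_nonneg_nonpos) auto
qed

lemma eventually_mixing_time_ge_log:
  assumes a: "0 < a" and \<epsilon>: "0 < \<epsilon>" "\<epsilon> < 1"
  obtains C N0 where "0 \<le> C"
    and "\<And>N. N0 \<le> N \<Longrightarrow> ereal ((real N)\<^sup>2 / pi\<^sup>2 * (ln (real N) - C)) \<le> mixing_time N a (1 - \<epsilon>)"
proof -
  define m where "m = nat \<lceil>2 / \<epsilon>\<rceil>"
  have "2 / \<epsilon> \<le> real m" unfolding m_def by linarith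
  moreover have "2 \<le> 2 / \<epsilon>" using \<epsilon> by (simp add: field_simps)
  ultimately have "1 \<le> real m" by linarith
  with \<open>2 / \<epsilon> \<le> real m\<close> have m: "2 \<le> real m * \<epsilon>" "1 \<le> m"
    using \<epsilon> by (simp_all add: field_simps)
  define D where "D = 48 * (real m)\<^sup>2 * (a + 1) / a"
  define C where "C = max 0 (ln (4 * D / \<epsilon>) / 2)"
  have D: "0 < D" unfolding D_def using a m by simp
  have "exp (- 2 * C) \<le> exp (- ln (4 * D / \<epsilon>))" unfolding C_def by simp
  then have "D * exp (- 2 * C) \<le> D * (\<epsilon> / (4 * D))"
    using D \<epsilon> by (intro mult_left_mono) (auto simp: exp_minus inverse_eq_divide)
  also have "\<dots> = \<epsilon> / 4" using D by simp
  finally have C: "48 * (real m)\<^sup>2 * (a + 1) / a * exp (- 2 * C) \<le> \<epsilon> / 4" unfolding D_def .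
  define N0 where "N0 = nat \<lceil>8 * (real m)\<^sup>2 * pi\<^sup>2 / \<epsilon>\<rceil> + 3"
  have "ereal ((real N)\<^sup>2 / pi\<^sup>2 * (ln (real N) - 2 * C)) \<le> mixing_time N a (1 - \<epsilon>)" if N: "N0 \<le> N" for N
  proof (rule mixing_time_ge_log[OF a _ m(2) m(1) _ C])
    have "8 * (real m)\<^sup>2 * pi\<^sup>2 / \<epsilon> \<le> real N" using N unfolding N0_def by linarith
    also have "\<dots> \<le> (real N)\<^sup>2" using N by (simp add: N0_def power2_eq_square mult_le_cancel_left1)
    finally show "8 * (real m)\<^sup>2 * pi\<^sup>2 \<le> \<epsilon> * (real N)\<^sup>2" using \<epsilon> by (simp add: field_simps)
  qed (use N in \<open>auto simp: N0_def C_def\<close>)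
  then show ?thesis using that[of "2 * C" N0] by (simp add: C_def)
qed

theorem proposition3p1:
  fixes \<alpha> \<epsilon> :: real
  assumes "\<alpha> > 0" and "0 < \<epsilon>" and "\<epsilon> < 1"
  shows "\<exists>C > 0. \<forall>N::nat. N \<ge> 2 \<longrightarrow>
    mixing_time N \<alpha> (1 - \<epsilon>) \<ge> ereal ((real N)\<^sup>2 / pi\<^sup>2 * (ln (real N) - C))"
proof -
  obtain C N0 where C: "0 \<le> C"
    and large: "\<And>N. N0 \<le> N \<Longrightarrow> ereal ((real N)\<^sup>2 / pi\<^sup>2 * (ln (real N) - C)) \<le> mixing_time N \<alpha> (1 - \<epsilon>)"
    using eventually_mixing_time_ge_log[OF assms] by blast
  define C' where "C' = max C (ln (real N0)) + 1"
  have "ereal ((real N)\<^sup>2 / pi\<^sup>2 * (ln (real N) - C')) \<le> mixing_time N \<alpha> (1 - \<epsilon>)" if N: "2 \<le> N" for N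
  proof (cases "N0 \<le> N")
    case True
    have "(real N)\<^sup>2 / pi\<^sup>2 * (ln (real N) - C') \<le> (real N)\<^sup>2 / pi\<^sup>2 * (ln (real N) - C)"
      unfolding C'_def by (intro mult_left_mono) auto
    then show ?thesis using large[OF True] order_trans ereal_less_eq(3) by blast
  next
    case False
    then have "ln (real N) \<le> ln (real N0)" using N by simp
    then have "ln (real N) - C' \<le> 0" unfolding C'_def by linarith
    then show ?thesis by (intro ereal_le_mixing_time_of_nonpos mult_nonneg_nonpos) auto
  qed
  moreover have "0 < C'" unfolding C'_def using C by (simp add: max_def)
  ultimately show ?thesis by blast
qed

end
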